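(* For every $m,n\in\mathbb{N}_0$, $$\frac{1}{m!\binom{n+m}{m}}\int_1^{+\infty}\frac{\{x\}\log^m x\,L_n^{(m)}(\log x)}{x^2}\,\mathrm{d}x=(-1)^{n-1}\ell_n^{(m)},$$ where $\ell_n^{(m)}=-\delta_{n,0}+\sum_{k=0}^n\binom{n}{k}(-1)^{n-k}\sum_{j=0}^{m+k}\frac{\gamma_j}{j!}$. Consequently the fractional part function $x\mapsto\{x\}$ belongs to $\mathcal{H}_m$ and $\{x\}=\sum_{n=0}^{+\infty}(-1)^{n-1}\ell_n^{(m)}L_n^{(m)}(\log x)$ with convergence in the norm of $\mathcal{H}_m$.
   Context: $\{x\}=x-\lfloor x\rfloor$. $L_n^{(m)}(u)=\sum_{k=0}^n\binom{n+m}{n-k}\frac{(-1)^k}{k!}u^k$ are the associated Laguerre polynomials. $\mathcal{H}_m=\mathrm{L}^2\big((1,+\infty);\frac{\log^m x}{m!\,x^2}\mathrm{d}x\big)$ is the space of real functions $f$ on $(1,\infty)$ with $\frac{1}{m!}\int_1^\infty\frac{|f(x)|^2\log^m x}{x^2}\mathrm{d}x<\infty$. $\delta_{n,k}$ is the Kronecker delta and $\gamma_j$ are the Stieltjes constants $\gamma_j=\lim_{N\to\infty}\left(\sum_{k=1}^N\frac{\log^j k}{k}-\frac{\log^{j+1}N}{j+1}\right)$. *)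

theory Defs
  imports "HOL-Analysis.Analysis"
begin

definition laguerre :: "nat \<Rightarrow> nat \<Rightarrow> real \<Rightarrow> real" where
  "laguerre n m u = (\<Sum>k=0..n. real ((n + m) choose (n - k)) * (-1) ^ k / fact k * u ^ k)"

definition stieltjes :: "nat \<Rightarrow> real" where
  "stieltjes j = lim (\<lambda>N. (\<Sum>k=1..N. ln (real k) ^ j / real k) - ln (real N) ^ (j + 1) / real (j + 1))"

definition ell :: "nat \<Rightarrow> nat \<Rightarrow> real" where
  "ell n m = - (if n = 0 then 1 else 0)
     + (\<Sum>k=0..n. real (n choose k) * (-1) ^ (n - k) * (\<Sum>j=0..m+k. stieltjes j / fact j))"

end

theory Submission
  imports Defs "HOL-Real_Asymp.Real_Asymp" "HOL-Computational_Algebra.Polynomial"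
begin

text \<open>On \<open>[k, k + 1)\<close> the fractional part is \<open>x - k\<close>, so \<open>\<integral>\<^sub>1\<^sup>N {x} log\<^sup>p x / x\<^sup>2 dx\<close> is an explicit
  finite sum; it equals \<open>p! - p! \<Sum>\<^sub>j\<^sub>\<le>\<^sub>p \<gamma>\<^sub>j(N) / j!\<close> with \<open>\<gamma>\<^sub>j(N)\<close> the partial expressions whose limits
  define the Stieltjes constants. Letting \<open>N \<rightarrow> \<infinity>\<close> gives \<open>\<integral>\<^sub>1\<^sup>\<infinity> {x} log\<^sup>p x / x\<^sup>2 dx = p! (1 - \<Sum>\<^sub>j\<^sub>\<le>\<^sub>p \<gamma>\<^sub>j / j!)\<close>,
  and expanding \<open>L\<^sub>n\<^sup>(\<^sup>m\<^sup>)\<close> into monomials yields the coefficient formula.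

  The functions \<open>L\<^sub>k\<^sup>(\<^sup>m\<^sup>)(log x)\<close> are orthogonal in \<open>\<H>\<^sub>m\<close>, so the partial sums of the Laguerre series of
  \<open>{x}\<close> are its best approximations by polynomials in \<open>log x\<close> of bounded degree, and convergence
  reduces to the density of these polynomials near \<open>{x}\<close>. With \<open>t = x\<^sup>-\<^sup>1\<^sup>/\<^sup>4\<close>, each power \<open>t\<^sup>k log\<^sup>j x\<close>
  is approximated by truncating the exponential series of \<open>t = exp (- log x / 4)\<close>; hence so is every
  continuous function of \<open>t\<close> (Weierstrass), and \<open>{x}\<close> is the \<open>\<H>\<^sub>m\<close>-limit of continuous functions of
  \<open>t\<close> vanishing at \<open>t = 0\<close> by dominated convergence.\<close>

section \<open>Logarithmic moments\<close>

fun ln_moment_primitive :: "nat \<Rightarrow> real \<Rightarrow> real" where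
  "ln_moment_primitive 0 x = - 1 / x"
| "ln_moment_primitive (Suc k) x = - (ln x ^ Suc k) / x + real (Suc k) * ln_moment_primitive k x"

lemma has_real_derivative_ln_power:
  "x > 0 \<Longrightarrow> ((\<lambda>x. ln x ^ Suc k) has_real_derivative real (Suc k) * ln x ^ k / x) (at x)"
  using DERIV_chain2[OF DERIV_pow[of "Suc k" "ln x"] DERIV_ln[of x]] by (simp add: divide_inverse)

lemma has_real_derivative_ln_moment_primitive:
  "x > 0 \<Longrightarrow> (ln_moment_primitive k has_real_derivative ln x ^ k / x\<^sup>2) (at x)"
proof (induction k)
  case 0
  then show ?case
    by (auto intro!: derivative_eq_intros simp: power2_eq_square field_simps)
next
  case (Suc k)
  have "((\<lambda>x. - (ln x ^ Suc k) / x) has_real_derivative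
         (- (real (Suc k) * ln x ^ k / x) * x - (- (ln x ^ Suc k)) * 1) / (x * x)) (at x)"
    using Suc.prems by (intro DERIV_minus DERIV_divide has_real_derivative_ln_power DERIV_ident) auto
  from DERIV_add[OF this DERIV_cmult[OF Suc.IH[OF Suc.prems], of "real (Suc k)"]]
  show ?case
    using Suc.prems by (simp add: field_simps power2_eq_square)
qed

lemma ln_moment_primitive_1: "ln_moment_primitive k 1 = - fact k"
  by (induction k) auto

lemma ln_moment_primitive_tendsto_0: "(ln_moment_primitive k \<longlongrightarrow> 0) at_top"
proof (induction k)
  case 0
  then show ?case by simp real_asymp
next
  case (Suc k)
  have "((\<lambda>x::real. - (ln x ^ Suc k) / x) \<longlongrightarrow> 0) at_top" by real_asymp
  from tendsto_add[OF this tendsto_mult[OF tendsto_const Suc.IH, of "real (Suc k)"]]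
  show ?case by simp
qed

lemma ln_moment_primitive_eq:
  "y \<noteq> 0 \<Longrightarrow> ln_moment_primitive k y = - fact k * (\<Sum>i\<le>k. ln y ^ i / fact i) / y"
proof (induction k)
  case (Suc k)
  have "fact (Suc k) * (\<Sum>i\<le>Suc k. ln y ^ i / fact i)
      = ln y ^ Suc k + real (Suc k) * (fact k * (\<Sum>i\<le>k. ln y ^ i / fact i))"
    by (simp add: sum.atMost_Suc ring_distribs del: fact_Suc) (simp add: algebra_simps)
  moreover have "ln_moment_primitive (Suc k) y
      = - (ln y ^ Suc k + real (Suc k) * (fact k * (\<Sum>i\<le>k. ln y ^ i / fact i))) / y"
    using Suc.prems by (simp add: Suc.IH field_simps)
  ultimately show ?case
    by simp
qed simp

lemma ln_moment:
  shows set_integrable_ln_moment: "set_integrable lborel {1<..} (\<lambda>x::real. ln x ^ k / x\<^sup>2)"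
    and set_integral_ln_moment: "set_lebesgue_integral lborel {1<..} (\<lambda>x::real. ln x ^ k / x\<^sup>2) = fact k"
proof -
  have at_1: "((ln_moment_primitive k \<circ> real_of_ereal) \<longlongrightarrow> - fact k) (at_right (ereal 1))"
    unfolding ereal_tendsto_simps ln_moment_primitive_1[of k, symmetric]
    by (intro tendsto_within_subset[OF DERIV_isCont[OF has_real_derivative_ln_moment_primitive,
          unfolded isCont_def]]) auto
  have at_top: "((ln_moment_primitive k \<circ> real_of_ereal) \<longlongrightarrow> 0) (at_left \<infinity>)"
    unfolding ereal_tendsto_simps by (rule ln_moment_primitive_tendsto_0)
  note FTC = interval_integral_FTC_nonneg[where F = "ln_moment_primitive k"
      and f = "\<lambda>x. ln x ^ k / x\<^sup>2", OF _ _ _ _ at_1 at_top]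
  have "set_integrable lborel (einterval (ereal 1) \<infinity>) (\<lambda>x::real. ln x ^ k / x\<^sup>2)"
       "(LBINT x=ereal 1..\<infinity>. ln x ^ k / x\<^sup>2) = 0 - (- fact k)"
    by (rule FTC; auto intro!: has_real_derivative_ln_moment_primitive continuous_intros)+
  then show "set_integrable lborel {1<..} (\<lambda>x::real. ln x ^ k / x\<^sup>2)"
    and "set_lebesgue_integral lborel {1<..} (\<lambda>x::real. ln x ^ k / x\<^sup>2) = fact k"
    by (auto simp: interval_lebesgue_integral_def)
qed

section \<open>Moments of the fractional part and the Stieltjes constants\<close>

definition stieltjes_partial :: "nat \<Rightarrow> nat \<Rightarrow> real" where
  "stieltjes_partial j N = (\<Sum>k=1..N. ln (real k) ^ j / real k) - ln (real N) ^ (j + 1) / real (j + 1)"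

lemma stieltjes_eq_lim: "stieltjes j = lim (stieltjes_partial j)"
  unfolding stieltjes_def stieltjes_partial_def by simp

lemma stieltjes_partial_Suc:
  "(stieltjes_partial i (Suc N) - stieltjes_partial i N) / fact i
    = ln (real N + 1) ^ i / fact i / (real N + 1)
      - ln (real N + 1) ^ (i + 1) / fact (i + 1) + ln (real N) ^ (i + 1) / fact (i + 1)"
proof -
  have "stieltjes_partial i (Suc N) - stieltjes_partial i N
      = ln (real N + 1) ^ i / (real N + 1) - ln (real N + 1) ^ (i + 1) / real (i + 1)
        + ln (real N) ^ (i + 1) / real (i + 1)"
    by (simp add: stieltjes_partial_def add.commute)
  moreover have "fact (i + 1) = real (i + 1) * (fact i :: real)"
    by simp
  ultimately show ?thesis
    by (simp add: diff_divide_distrib add_divide_distrib del: fact_Suc of_nat_Suc)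
qed

text \<open>Equals the integral of \<open>{x} log\<^sup>p x / x\<^sup>2\<close> over \<open>[1, N]\<close> (\<open>has_integral_frac_ln_moment\<close>).\<close>
definition frac_moment_partial :: "nat \<Rightarrow> nat \<Rightarrow> real" where
  "frac_moment_partial p N = fact p - fact p * (\<Sum>i\<le>p. stieltjes_partial i N / fact i)"

lemma has_integral_frac_ln_moment_unit_interval:
  fixes k :: nat
  assumes "k \<ge> 1"
  shows "((\<lambda>x. frac x * ln x ^ p / x\<^sup>2) has_integral
     (ln (real k + 1) ^ Suc p / (real p + 1) - real k * ln_moment_primitive p (real k + 1)) -
     (ln (real k) ^ Suc p / (real p + 1) - real k * ln_moment_primitive p (real k))) {real k..real k + 1}"
proof -
  let ?G = "\<lambda>x. ln x ^ Suc p / (real p + 1) - real k * ln_moment_primitive p x"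
  have "((\<lambda>x. (x - real k) * ln x ^ p / x\<^sup>2) has_integral ?G (real k + 1) - ?G (real k))
      {real k..real k + 1}"
  proof (rule fundamental_theorem_of_calculus)
    fix x assume x: "x \<in> {real k..real k + 1}"
    then have "x > 0"
      using assms by auto
    have "((\<lambda>x. ln x ^ Suc p / (real p + 1)) has_real_derivative ln x ^ p / x) (at x)"
      using DERIV_cdivide[OF has_real_derivative_ln_power[OF \<open>x > 0\<close>, of p], of "real p + 1"]
      by (simp add: add.commute)
    from DERIV_diff[OF this DERIV_cmult[OF has_real_derivative_ln_moment_primitive[OF \<open>x > 0\<close>]]]
    have "(?G has_real_derivative (x - real k) * ln x ^ p / x\<^sup>2) (at x)"
      by (rule DERIV_cong) (use \<open>x > 0\<close> in \<open>simp add: field_simps power2_eq_square\<close>)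
    then show "(?G has_vector_derivative (x - real k) * ln x ^ p / x\<^sup>2) (at x within {real k..real k + 1})"
      by (simp add: has_real_derivative_iff_has_vector_derivative[symmetric] has_field_derivative_at_within)
  qed simp
  then show ?thesis
  proof (rule has_integral_spike_finite[of "{real k + 1}", rotated 2])
    fix x assume "x \<in> {real k..real k + 1} - {real k + 1}"
    then have "\<lfloor>x\<rfloor> = int k"
      by (subst floor_eq_iff) auto
    then show "frac x * ln x ^ p / x\<^sup>2 = (x - real k) * ln x ^ p / x\<^sup>2"
      by (simp add: frac_def)
  qed auto
qed

lemma sum_shifted_exp_partial:
  "(\<Sum>i\<le>p. t ^ (i + 1) / fact (i + 1)) = (\<Sum>i\<le>p. t ^ i / fact i) + t ^ (p + 1) / fact (p + 1) - (1::real)"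
  using sum.atMost_Suc_shift[of "\<lambda>i. t ^ i / fact i" p] by (simp add: sum.atMost_Suc)

lemma frac_moment_partial_Suc:
  assumes "N \<ge> 1"
  shows "frac_moment_partial p (Suc N) - frac_moment_partial p N =
     (ln (real N + 1) ^ Suc p / (real p + 1) - real N * ln_moment_primitive p (real N + 1)) -
     (ln (real N) ^ Suc p / (real p + 1) - real N * ln_moment_primitive p (real N))"
proof -
  define a where "a = real N"
  define y z where "y = ln (a + 1)" and "z = ln a"
  define E where "E t = (\<Sum>i\<le>p. t ^ i / fact i)" for t :: real
  have "a > 0"
    using assms by (simp add: a_def)
  have fact_Suc_p: "t ^ (p + 1) / fact (p + 1) = t ^ (p + 1) / (real p + 1) / fact p" for t :: real
    by (simp add: fact_Suc[of p] del: fact_Suc)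
  have "frac_moment_partial p (Suc N) - frac_moment_partial p N
      = - fact p * (\<Sum>i\<le>p. (stieltjes_partial i (Suc N) - stieltjes_partial i N) / fact i)"
    unfolding frac_moment_partial_def by (simp add: sum_subtractf diff_divide_distrib algebra_simps)
  also have "\<dots> = - fact p * (E y / (a + 1)
      - (E y + y ^ (p + 1) / (real p + 1) / fact p - 1) + (E z + z ^ (p + 1) / (real p + 1) / fact p - 1))"
    unfolding stieltjes_partial_Suc E_def sum_shifted_exp_partial[symmetric] fact_Suc_p[symmetric]
      y_def[symmetric] z_def[symmetric] a_def[symmetric]
    by (simp add: sum.distrib sum_subtractf sum_divide_distrib)
  also have "\<dots> = (y ^ (p + 1) / (real p + 1) - a * (- fact p * E y / (a + 1)))
      - (z ^ (p + 1) / (real p + 1) - a * (- fact p * E z / a))"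
  proof -
    have rearrange: "- F * (A / (a + 1) - (A + Y / F - 1) + (B + Z / F - 1))
        = (Y - a * (- F * A / (a + 1))) - (Z - a * (- F * B / a))"
      if "F > 0" for F A B Y Z :: real
      using that \<open>a > 0\<close> by (simp add: divide_simps) (simp add: algebra_simps)
    show ?thesis
      by (rule rearrange) simp
  qed
  also have "\<dots> = (ln (real N + 1) ^ Suc p / (real p + 1) - real N * ln_moment_primitive p (real N + 1)) -
     (ln (real N) ^ Suc p / (real p + 1) - real N * ln_moment_primitive p (real N))"
    using \<open>a > 0\<close> by (simp add: ln_moment_primitive_eq E_def y_def z_def a_def)
  finally show ?thesis .
qed

lemma has_integral_frac_ln_moment:
  assumes "N \<ge> 1"
  shows "((\<lambda>x. frac x * ln x ^ p / x\<^sup>2) has_integral frac_moment_partial p N) {1..real N}"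
  using assms
proof (induction N rule: dec_induct)
  case base
  have "(\<Sum>i\<le>p. stieltjes_partial i 1 / fact i) = (\<Sum>i\<le>p. if i = 0 then 1 else 0)"
    by (rule sum.cong) (auto simp: stieltjes_partial_def)
  then have "frac_moment_partial p 1 = 0"
    unfolding frac_moment_partial_def by simp
  then show ?case
    using has_integral_refl(2)[of _ "1::real"] by simp
next
  case (step N)
  have "((\<lambda>x. frac x * ln x ^ p / x\<^sup>2) has_integral
      frac_moment_partial p N + (frac_moment_partial p (Suc N) - frac_moment_partial p N)) {1..real N + 1}"
    using has_integral_combine[OF _ _ step.IH has_integral_frac_ln_moment_unit_interval] step.hyps
    unfolding frac_moment_partial_Suc[OF step.hyps(1)] by simp
  then show ?case
    by (simp add: add.commute)
qed

lemma set_integrable_abs_le: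
  fixes g h :: "real \<Rightarrow> real"
  assumes "A \<in> sets borel" "g \<in> borel_measurable borel" "set_integrable lborel A h"
    and "\<And>x. x \<in> A \<Longrightarrow> \<bar>g x\<bar> \<le> h x"
  shows "set_integrable lborel A g"
proof (rule set_integrable_bound[OF assms(3)])
  show "set_borel_measurable lborel A g"
    using assms(1,2) unfolding set_borel_measurable_def by measurable
  show "AE x in lborel. x \<in> A \<longrightarrow> norm (g x) \<le> norm (h x)"
    using assms(4) by (auto intro!: AE_I2 order_trans[OF _ abs_ge_self])
qed

lemma borel_measurable_frac [measurable]: "frac \<in> borel_measurable (borel :: real measure)"
  unfolding frac_def by measurable

lemma set_integrable_frac_ln_moment:
  "set_integrable lborel {1<..} (\<lambda>x::real. frac x * ln x ^ p / x\<^sup>2)"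
proof (rule set_integrable_abs_le[OF _ _ set_integrable_ln_moment])
  fix x :: real
  assume "x \<in> {1<..}"
  then have "0 \<le> frac x" "frac x \<le> 1" "ln x \<ge> 0"
    using frac_lt_1[of x] by auto
  then show "\<bar>frac x * ln x ^ p / x\<^sup>2\<bar> \<le> ln x ^ p / x\<^sup>2"
    by (auto simp: abs_mult intro!: divide_right_mono mult_left_le_one_le)
qed measurable

lemma frac_moment_partial_tendsto:
  "frac_moment_partial p \<longlonglongrightarrow> set_lebesgue_integral lborel {1<..} (\<lambda>x::real. frac x * ln x ^ p / x\<^sup>2)"
proof -
  let ?f = "\<lambda>x::real. frac x * ln x ^ p / x\<^sup>2"
  have Ici_Ioi: "(\<lambda>x. indicator {1..} x *\<^sub>R ?f x) = (\<lambda>x. indicator {1<..} x *\<^sub>R ?f x)"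
    by (rule ext) (auto simp: indicator_def)
  have integrable: "set_integrable lborel {1..} ?f"
    using set_integrable_frac_ln_moment[of p] unfolding set_integrable_def Ici_Ioi .
  have "((\<lambda>b. set_lebesgue_integral lborel {1..b} ?f) \<longlongrightarrow> set_lebesgue_integral lborel {1<..} ?f) at_top"
    using tendsto_set_lebesgue_integral_at_top[OF _ integrable]
    unfolding set_lebesgue_integral_def Ici_Ioi by simp
  then have "(\<lambda>N. set_lebesgue_integral lborel {1..real N} ?f) \<longlonglongrightarrow> set_lebesgue_integral lborel {1<..} ?f"
    by (rule filterlim_compose[OF _ filterlim_real_sequentially])
  moreover have "\<forall>\<^sub>F N in sequentially. set_lebesgue_integral lborel {1..real N} ?f = frac_moment_partial p N"
    using eventually_ge_at_top[of 1]
  proof eventually_elim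
    case (elim N)
    have "set_integrable lborel {1..real N} ?f"
      by (rule set_integrable_subset[OF integrable]) auto
    then show ?case
      by (simp add: set_borel_integral_eq_integral integral_unique[OF has_integral_frac_ln_moment[OF elim]])
  qed
  ultimately show ?thesis
    by (blast intro: Lim_transform_eventually)
qed

text \<open>\<open>stieltjes\<close> is defined by \<open>lim\<close>, so the existence of the limit has to be shown; it follows
  by induction on \<open>p\<close> from the convergence of \<open>frac_moment_partial p\<close>.\<close>
lemma stieltjes_partial_tendsto: "stieltjes_partial p \<longlonglongrightarrow> stieltjes p"
proof (induction p rule: less_induct)
  case (less p)
  have partial_eq: "stieltjes_partial p N
      = fact p * (1 - frac_moment_partial p N / fact p - (\<Sum>i<p. stieltjes_partial i N / fact i))" for N
    unfolding frac_moment_partial_def by (simp add: lessThan_Suc_atMost[symmetric] field_simps)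
  have "stieltjes_partial p \<longlonglongrightarrow> fact p * (1
      - set_lebesgue_integral lborel {1<..} (\<lambda>x::real. frac x * ln x ^ p / x\<^sup>2) / fact p
      - (\<Sum>i<p. stieltjes i / fact i))"
    unfolding partial_eq by (auto intro!: tendsto_intros frac_moment_partial_tendsto tendsto_sum less.IH)
  then have "convergent (stieltjes_partial p)"
    unfolding convergent_def by blast
  then show ?case
    unfolding stieltjes_eq_lim by (rule convergent_LIMSEQ_iff[THEN iffD1])
qed

lemma set_integral_frac_ln_moment:
  "set_lebesgue_integral lborel {1<..} (\<lambda>x::real. frac x * ln x ^ p / x\<^sup>2)
     = fact p - fact p * (\<Sum>i\<le>p. stieltjes i / fact i)"
proof (rule LIMSEQ_unique[OF frac_moment_partial_tendsto])
  show "frac_moment_partial p \<longlonglongrightarrow> fact p - fact p * (\<Sum>i\<le>p. stieltjes i / fact i)"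
    unfolding frac_moment_partial_def[abs_def]
    by (auto intro!: tendsto_intros tendsto_sum stieltjes_partial_tendsto)
qed

section \<open>The Laguerre coefficients of the fractional part\<close>

lemma set_integrable_sum:
  fixes f :: "'i \<Rightarrow> 'a \<Rightarrow> real"
  assumes "\<And>i. i \<in> I \<Longrightarrow> set_integrable M A (f i)"
  shows "set_integrable M A (\<lambda>x. \<Sum>i\<in>I. f i x)"
  using assms unfolding set_integrable_def scaleR_sum_right by (rule Bochner_Integration.integrable_sum)

lemma set_integral_sum:
  fixes f :: "'i \<Rightarrow> 'a \<Rightarrow> real"
  assumes "\<And>i. i \<in> I \<Longrightarrow> set_integrable M A (f i)"
  shows "set_lebesgue_integral M A (\<lambda>x. \<Sum>i\<in>I. f i x) = (\<Sum>i\<in>I. set_lebesgue_integral M A (f i))"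
  using assms unfolding set_integrable_def set_lebesgue_integral_def scaleR_sum_right
  by (rule Bochner_Integration.integral_sum)

lemma frac_ln_power_laguerre_eq:
  "frac x * ln x ^ m * laguerre n m (ln x) / x\<^sup>2 =
   (\<Sum>k=0..n. real ((n + m) choose (n - k)) * (-1) ^ k / fact k * (frac x * ln x ^ (m + k) / x\<^sup>2))"
  unfolding laguerre_def by (simp add: sum_distrib_left sum_divide_distrib power_add algebra_simps)

lemma set_integrable_frac_laguerre:
  "set_integrable lborel {1<..} (\<lambda>x::real. frac x * ln x ^ m * laguerre n m (ln x) / x ^ 2)"
  unfolding frac_ln_power_laguerre_eq
  by (intro set_integrable_sum set_integrable_mult_right set_integrable_frac_ln_moment)

lemma set_integral_frac_laguerre:
  "set_lebesgue_integral lborel {1<..} (\<lambda>x::real. frac x * ln x ^ m * laguerre n m (ln x) / x ^ 2)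
    = (\<Sum>k=0..n. real ((n + m) choose (n - k)) * (-1) ^ k / fact k
         * (fact (m + k) * (1 - (\<Sum>j\<le>m + k. stieltjes j / fact j))))"
  unfolding frac_ln_power_laguerre_eq
  by (subst set_integral_sum, intro set_integrable_mult_right set_integrable_frac_ln_moment)
    (simp only: set_integral_mult_right set_integral_frac_ln_moment right_diff_distrib mult_1_right)

lemma laguerre_normalized_coeff:
  assumes "k \<le> n"
  shows "1 / (fact m * real ((n + m) choose m)) * (real ((n + m) choose (n - k)) * (-1) ^ k / fact k * (fact (m + k) * t))
         = real (n choose k) * (-1) ^ k * t"
proof -
  have "real ((n + m) choose (n - k)) = fact (n + m) / (fact (n - k) * fact (m + k))"
    using assms by (subst binomial_fact) (auto simp: algebra_simps)
  moreover have "real ((n + m) choose m) = fact (n + m) / (fact m * fact n)"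
    by (subst binomial_fact) auto
  moreover have "real (n choose k) = fact n / (fact k * fact (n - k))"
    using assms by (rule binomial_fact)
  ultimately show ?thesis
    by (simp only:) (simp add: field_simps)
qed

lemma minus_one_power_diff: "k \<le> n \<Longrightarrow> (-1) ^ k = (-1) ^ n * (-1 :: 'a :: ring_1) ^ (n - k)"
proof -
  assume "k \<le> n"
  then have "n + (n - k) = k + 2 * (n - k)"
    by simp
  then have "(-1 :: 'a) ^ n * (-1) ^ (n - k) = (-1) ^ (k + 2 * (n - k))"
    unfolding power_add[symmetric] by (rule arg_cong)
  then show ?thesis
    by (simp add: power_add power_mult)
qed

lemma frac_laguerre_coefficient:
  "1 / (fact m * real ((n + m) choose m)) *
     set_lebesgue_integral lborel {1<..} (\<lambda>x::real. frac x * ln x ^ m * laguerre n m (ln x) / x ^ 2)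
   = - ((-1) ^ n) * ell n m"
proof -
  define S where "S q = (\<Sum>j\<le>q. stieltjes j / fact j)" for q
  have "1 / (fact m * real ((n + m) choose m)) *
      set_lebesgue_integral lborel {1<..} (\<lambda>x::real. frac x * ln x ^ m * laguerre n m (ln x) / x ^ 2)
    = (\<Sum>k=0..n. real (n choose k) * (-1) ^ k * (1 - S (m + k)))"
    unfolding set_integral_frac_laguerre sum_distrib_left S_def[symmetric]
    by (intro sum.cong refl laguerre_normalized_coeff) simp
  also have "\<dots> = (\<Sum>k=0..n. (-1) ^ k * real (n choose k))
      - (-1) ^ n * (\<Sum>k=0..n. real (n choose k) * (-1) ^ (n - k) * S (m + k))"
  proof -
    have "(\<Sum>k=0..n. real (n choose k) * (-1) ^ k * S (m + k))
        = (\<Sum>k=0..n. (-1) ^ n * (real (n choose k) * (-1) ^ (n - k) * S (m + k)))"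
    proof (rule sum.cong[OF refl])
      fix k
      assume "k \<in> {0..n}"
      then show "real (n choose k) * (-1) ^ k * S (m + k)
          = (-1) ^ n * (real (n choose k) * (-1) ^ (n - k) * S (m + k))"
        by (subst minus_one_power_diff[of k n]) (auto simp: mult_ac)
    qed
    then show ?thesis
      by (simp add: sum_distrib_left sum_subtractf right_diff_distrib mult_ac)
  qed
  also have "(\<Sum>k=0..n. (-1) ^ k * real (n choose k)) = (if n = 0 then 1 else 0)"
    using choose_alternating_sum[of n] by (auto simp: atLeast0AtMost)
  finally show ?thesis
    unfolding ell_def S_def by (auto simp: algebra_simps atLeast0AtMost)
qed

section \<open>Functions of logarithmic growth and the weighted inner product\<close>

definition log_tempered :: "(real \<Rightarrow> real) \<Rightarrow> bool" where
  "log_tempered g \<longleftrightarrow> g \<in> borel_measurable borel \<and> (\<exists>C k. \<forall>x>1. \<bar>g x\<bar> \<le> C * (1 + ln x) ^ k)"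

lemma log_temperedI:
  assumes "g \<in> borel_measurable borel" "\<And>x. x > 1 \<Longrightarrow> \<bar>g x\<bar> \<le> C * (1 + ln x) ^ k"
  shows "log_tempered g"
  using assms unfolding log_tempered_def by blast

lemma log_temperedE:
  assumes "log_tempered g"
  obtains C k where "C \<ge> 0" "\<And>x. x > 1 \<Longrightarrow> \<bar>g x\<bar> \<le> C * (1 + ln x) ^ k"
proof -
  obtain C k where bound: "\<And>x. x > 1 \<Longrightarrow> \<bar>g x\<bar> \<le> C * (1 + ln x) ^ k"
    using assms unfolding log_tempered_def by blast
  have "\<bar>g x\<bar> \<le> \<bar>C\<bar> * (1 + ln x) ^ k" if "x > 1" for x
    using bound[OF that] mult_right_mono[of C "\<bar>C\<bar>" "(1 + ln x) ^ k"] that by fastforce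
  then show ?thesis
    using that[of "\<bar>C\<bar>"] by auto
qed

lemma log_tempered_measurable: "log_tempered g \<Longrightarrow> g \<in> borel_measurable borel"
  unfolding log_tempered_def by blast

lemma log_tempered_bounded:
  assumes "g \<in> borel_measurable borel" "\<And>x. x > 1 \<Longrightarrow> \<bar>g x\<bar> \<le> B"
  shows "log_tempered g"
  by (rule log_temperedI[OF assms(1), of B 0]) (simp add: assms(2))

lemma log_tempered_const: "log_tempered (\<lambda>x. c)"
  by (rule log_tempered_bounded[of _ "\<bar>c\<bar>"]) auto

lemma log_tempered_ln_power: "log_tempered (\<lambda>x. ln x ^ j)"
proof (rule log_temperedI[of _ 1 j])
  fix x :: real
  assume "x > 1"
  then show "\<bar>ln x ^ j\<bar> \<le> 1 * (1 + ln x) ^ j"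
    by (simp add: power_abs power_mono)
qed measurable

lemma log_tempered_mult:
  assumes "log_tempered g" "log_tempered h"
  shows "log_tempered (\<lambda>x. g x * h x)"
proof -
  obtain C a where C: "C \<ge> 0" "\<And>x. x > 1 \<Longrightarrow> \<bar>g x\<bar> \<le> C * (1 + ln x) ^ a"
    using log_temperedE[OF assms(1)] by blast
  obtain D b where D: "D \<ge> 0" "\<And>x. x > 1 \<Longrightarrow> \<bar>h x\<bar> \<le> D * (1 + ln x) ^ b"
    using log_temperedE[OF assms(2)] by blast
  show ?thesis
  proof (rule log_temperedI[of _ "C * D" "a + b"])
    fix x :: real
    assume "x > 1"
    then have "\<bar>g x * h x\<bar> \<le> C * (1 + ln x) ^ a * (D * (1 + ln x) ^ b)"
      unfolding abs_mult using C D by (intro mult_mono) auto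
    then show "\<bar>g x * h x\<bar> \<le> C * D * (1 + ln x) ^ (a + b)"
      by (simp add: power_add mult_ac)
  qed (use log_tempered_measurable[OF assms(1)] log_tempered_measurable[OF assms(2)] in measurable)
qed

lemma log_tempered_add:
  assumes "log_tempered g" "log_tempered h"
  shows "log_tempered (\<lambda>x. g x + h x)"
proof -
  obtain C a where C: "C \<ge> 0" "\<And>x. x > 1 \<Longrightarrow> \<bar>g x\<bar> \<le> C * (1 + ln x) ^ a"
    using log_temperedE[OF assms(1)] by blast
  obtain D b where D: "D \<ge> 0" "\<And>x. x > 1 \<Longrightarrow> \<bar>h x\<bar> \<le> D * (1 + ln x) ^ b"
    using log_temperedE[OF assms(2)] by blast
  show ?thesis
  proof (rule log_temperedI[of _ "C + D" "a + b"])
    fix x :: real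
    assume "x > 1"
    then have "(1 + ln x) ^ a \<le> (1 + ln x) ^ (a + b)" "(1 + ln x) ^ b \<le> (1 + ln x) ^ (a + b)"
      by (auto intro!: power_increasing)
    then have "C * (1 + ln x) ^ a + D * (1 + ln x) ^ b \<le> (C + D) * (1 + ln x) ^ (a + b)"
      using C(1) D(1) by (simp add: distrib_right add_mono mult_left_mono)
    then show "\<bar>g x + h x\<bar> \<le> (C + D) * (1 + ln x) ^ (a + b)"
      using C(2)[OF \<open>x > 1\<close>] D(2)[OF \<open>x > 1\<close>] abs_triangle_ineq[of "g x" "h x"] by linarith
  qed (use log_tempered_measurable[OF assms(1)] log_tempered_measurable[OF assms(2)] in measurable)
qed

lemma log_tempered_cmult: "log_tempered g \<Longrightarrow> log_tempered (\<lambda>x. c * g x)"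
  using log_tempered_mult[OF log_tempered_const] .

lemma log_tempered_diff: "log_tempered g \<Longrightarrow> log_tempered h \<Longrightarrow> log_tempered (\<lambda>x. g x - h x)"
  using log_tempered_add[OF _ log_tempered_cmult, of g h "-1"] by simp

lemma log_tempered_sum: "(\<And>i. i \<in> I \<Longrightarrow> log_tempered (f i)) \<Longrightarrow> log_tempered (\<lambda>x. \<Sum>i\<in>I. f i x)"
  by (induction I rule: infinite_finite_induct) (auto intro: log_tempered_const log_tempered_add)

lemma log_tempered_poly_ln: "log_tempered (\<lambda>x. poly p (ln x))"
  unfolding poly_altdef by (intro log_tempered_sum log_tempered_cmult log_tempered_ln_power)

lemma log_tempered_laguerre_ln: "log_tempered (\<lambda>x. laguerre k m (ln x))"
  unfolding laguerre_def by (intro log_tempered_sum log_tempered_cmult log_tempered_ln_power)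

lemma log_tempered_frac: "log_tempered frac"
  by (rule log_tempered_bounded[of _ 1]) (auto simp: frac_lt_1 less_imp_le)

lemma set_integrable_log_tempered:
  assumes "log_tempered g"
  shows "set_integrable lborel {1<..} (\<lambda>x. g x / x\<^sup>2)"
proof -
  obtain C k where C: "C \<ge> 0" "\<And>x. x > 1 \<Longrightarrow> \<bar>g x\<bar> \<le> C * (1 + ln x) ^ k"
    using log_temperedE[OF assms] by blast
  have binomial: "C * (1 + ln x) ^ k / x\<^sup>2 = (\<Sum>i\<le>k. C * real (k choose i) * (ln x ^ i / x\<^sup>2))" for x
    by (simp add: add.commute[of 1] binomial_ring sum_distrib_left sum_divide_distrib mult_ac)
  show ?thesis
  proof (rule set_integrable_abs_le)
    show "set_integrable lborel {1<..} (\<lambda>x. C * (1 + ln x) ^ k / x\<^sup>2)"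
      unfolding binomial by (intro set_integrable_sum set_integrable_mult_right set_integrable_ln_moment)
    show "\<bar>g x / x\<^sup>2\<bar> \<le> C * (1 + ln x) ^ k / x\<^sup>2" if "x \<in> {1<..}" for x
      using C(2)[of x] that by (simp add: abs_divide divide_right_mono)
  qed (use log_tempered_measurable[OF assms] in measurable)
qed

text \<open>\<open>m!\<close> times the inner product of \<open>\<H>\<^sub>m\<close>.\<close>
definition weighted_inner :: "nat \<Rightarrow> (real \<Rightarrow> real) \<Rightarrow> (real \<Rightarrow> real) \<Rightarrow> real" where
  "weighted_inner m g h = set_lebesgue_integral lborel {1<..} (\<lambda>x. g x * h x * ln x ^ m / x\<^sup>2)"

definition weighted_sqnorm :: "nat \<Rightarrow> (real \<Rightarrow> real) \<Rightarrow> real" where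
  "weighted_sqnorm m g = weighted_inner m g g"

lemma set_integrable_weighted:
  "log_tempered g \<Longrightarrow> log_tempered h \<Longrightarrow> set_integrable lborel {1<..} (\<lambda>x. g x * h x * ln x ^ m / x\<^sup>2)"
  using set_integrable_log_tempered[OF log_tempered_mult[OF log_tempered_mult log_tempered_ln_power]]
  by simp

lemma weighted_inner_cong:
  "(\<And>x. x > 1 \<Longrightarrow> g x * h x = g' x * h' x) \<Longrightarrow> weighted_inner m g h = weighted_inner m g' h'"
  unfolding weighted_inner_def by (intro set_lebesgue_integral_cong) auto

lemma weighted_inner_commute: "weighted_inner m g h = weighted_inner m h g"
  by (rule weighted_inner_cong) simp

lemma weighted_sqnorm_nonneg: "weighted_sqnorm m g \<ge> 0"
  unfolding weighted_sqnorm_def weighted_inner_def set_lebesgue_integral_def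
  by (rule Bochner_Integration.integral_nonneg) (auto simp: indicator_def)

lemma weighted_sqnorm_mono:
  assumes "log_tempered g" "log_tempered h" "\<And>x. x > 1 \<Longrightarrow> \<bar>g x\<bar> \<le> \<bar>h x\<bar>"
  shows "weighted_sqnorm m g \<le> weighted_sqnorm m h"
  unfolding weighted_sqnorm_def weighted_inner_def
proof (rule set_integral_mono[OF set_integrable_weighted set_integrable_weighted])
  fix x :: real
  assume "x \<in> {1<..}"
  moreover have "g x * g x \<le> h x * h x"
    using assms(3) \<open>x \<in> {1<..}\<close> by (simp add: abs_le_square_iff flip: power2_eq_square)
  ultimately show "g x * g x * ln x ^ m / x\<^sup>2 \<le> h x * h x * ln x ^ m / x\<^sup>2"
    by (intro divide_right_mono mult_right_mono) auto
qed (use assms in auto)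

lemma weighted_sqnorm_cmult: "weighted_sqnorm m (\<lambda>x. c * g x) = c\<^sup>2 * weighted_sqnorm m g"
  unfolding weighted_sqnorm_def weighted_inner_def
  by (subst set_integral_mult_right[symmetric], rule set_lebesgue_integral_cong)
    (auto simp: power2_eq_square)

lemma weighted_sqnorm_ln_power: "weighted_sqnorm m (\<lambda>x. ln x ^ k) = fact (2 * k + m)"
proof -
  have "ln x ^ k * ln x ^ k * ln x ^ m / x\<^sup>2 = ln x ^ (2 * k + m) / x\<^sup>2" for x :: real
    by (simp add: power_add mult_2)
  then show ?thesis
    unfolding weighted_sqnorm_def weighted_inner_def by (simp only: set_integral_ln_moment)
qed

lemma weighted_sqnorm_const: "weighted_sqnorm m (\<lambda>x. c) = c\<^sup>2 * fact m"
  using weighted_sqnorm_cmult[of m c "\<lambda>x. ln x ^ 0"] weighted_sqnorm_ln_power[of m 0] by simp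

lemma weighted_sqnorm_add_le:
  assumes "log_tempered g" "log_tempered h"
  shows "weighted_sqnorm m (\<lambda>x. g x + h x) \<le> 2 * weighted_sqnorm m g + 2 * weighted_sqnorm m h"
proof -
  have "weighted_sqnorm m (\<lambda>x. g x + h x)
      \<le> set_lebesgue_integral lborel {1<..} (\<lambda>x. 2 * (g x * g x * ln x ^ m / x\<^sup>2) + 2 * (h x * h x * ln x ^ m / x\<^sup>2))"
    unfolding weighted_sqnorm_def weighted_inner_def
  proof (rule set_integral_mono)
    fix x :: real
    assume "x \<in> {1<..}"
    have "0 \<le> (g x - h x) * (g x - h x)"
      by simp
    then have "(g x + h x) * (g x + h x) \<le> 2 * (g x * g x) + 2 * (h x * h x)"
      by (simp add: algebra_simps)
    from mult_right_mono[OF this, of "ln x ^ m / x\<^sup>2"] \<open>x \<in> {1<..}\<close>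
    show "(g x + h x) * (g x + h x) * ln x ^ m / x\<^sup>2 \<le> 2 * (g x * g x * ln x ^ m / x\<^sup>2) + 2 * (h x * h x * ln x ^ m / x\<^sup>2)"
      by (simp add: algebra_simps add_divide_distrib)
  qed (intro set_integrable_weighted log_tempered_add assms,
      intro set_integral_add(1) set_integrable_mult_right set_integrable_weighted assms)
  also have "\<dots> = 2 * weighted_sqnorm m g + 2 * weighted_sqnorm m h"
    unfolding weighted_sqnorm_def weighted_inner_def
    by (simp only: set_integral_add(2)[OF set_integrable_mult_right set_integrable_mult_right]
        set_integral_mult_right set_integrable_weighted assms)
  finally show ?thesis .
qed

section \<open>Density of the polynomials in \<open>log x\<close>\<close>

definition ln_poly_approximable :: "nat \<Rightarrow> (real \<Rightarrow> real) \<Rightarrow> bool" where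
  "ln_poly_approximable m g \<longleftrightarrow> (\<forall>e>0. \<exists>p. weighted_sqnorm m (\<lambda>x. g x - poly p (ln x)) < e)"

lemma weighted_sqnorm_cong:
  "(\<And>x. x > 1 \<Longrightarrow> g x = h x) \<Longrightarrow> weighted_sqnorm m g = weighted_sqnorm m h"
  unfolding weighted_sqnorm_def by (rule weighted_inner_cong) simp

lemma ln_poly_approximable_poly: "ln_poly_approximable m (\<lambda>x. poly p (ln x))"
  using weighted_sqnorm_const[of m 0]
  unfolding ln_poly_approximable_def by (auto intro!: exI[of _ p])

lemma ln_poly_approximable_closure:
  assumes "log_tempered g"
    and approx: "\<And>e. e > 0 \<Longrightarrow> \<exists>h. log_tempered h \<and> ln_poly_approximable m h \<and> weighted_sqnorm m (\<lambda>x. g x - h x) < e"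
  shows "ln_poly_approximable m g"
  unfolding ln_poly_approximable_def
proof (intro allI impI)
  fix e :: real
  assume "e > 0"
  then obtain h where h: "log_tempered h" "ln_poly_approximable m h" "weighted_sqnorm m (\<lambda>x. g x - h x) < e / 4"
    using approx[of "e / 4"] by auto
  moreover have "e / 4 > 0"
    using \<open>e > 0\<close> by simp
  ultimately obtain p where p: "weighted_sqnorm m (\<lambda>x. h x - poly p (ln x)) < e / 4"
    unfolding ln_poly_approximable_def by blast
  have "weighted_sqnorm m (\<lambda>x. g x - poly p (ln x))
      = weighted_sqnorm m (\<lambda>x. (g x - h x) + (h x - poly p (ln x)))"
    by simp
  also have "\<dots> \<le> 2 * weighted_sqnorm m (\<lambda>x. g x - h x) + 2 * weighted_sqnorm m (\<lambda>x. h x - poly p (ln x))"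
    by (intro weighted_sqnorm_add_le log_tempered_diff assms h log_tempered_poly_ln)
  also have "\<dots> < e"
    using h(3) p by simp
  finally show "\<exists>p. weighted_sqnorm m (\<lambda>x. g x - poly p (ln x)) < e"
    by blast
qed

lemma ln_poly_approximable_add:
  assumes "log_tempered g" "log_tempered h" "ln_poly_approximable m g" "ln_poly_approximable m h"
  shows "ln_poly_approximable m (\<lambda>x. g x + h x)"
  unfolding ln_poly_approximable_def
proof (intro allI impI)
  fix e :: real
  assume "e > 0"
  then obtain p q where p: "weighted_sqnorm m (\<lambda>x. g x - poly p (ln x)) < e / 4"
      and q: "weighted_sqnorm m (\<lambda>x. h x - poly q (ln x)) < e / 4"
    using assms(3,4) unfolding ln_poly_approximable_def by (meson divide_pos_pos zero_less_numeral)
  have "weighted_sqnorm m (\<lambda>x. g x + h x - poly (p + q) (ln x))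
      = weighted_sqnorm m (\<lambda>x. (g x - poly p (ln x)) + (h x - poly q (ln x)))"
    by (simp add: algebra_simps)
  also have "\<dots> \<le> 2 * weighted_sqnorm m (\<lambda>x. g x - poly p (ln x)) + 2 * weighted_sqnorm m (\<lambda>x. h x - poly q (ln x))"
    by (intro weighted_sqnorm_add_le log_tempered_diff assms log_tempered_poly_ln)
  also have "\<dots> < e"
    using p q by simp
  finally show "\<exists>p. weighted_sqnorm m (\<lambda>x. g x + h x - poly p (ln x)) < e"
    by blast
qed

lemma ln_poly_approximable_cmult:
  assumes "log_tempered g" "ln_poly_approximable m g"
  shows "ln_poly_approximable m (\<lambda>x. c * g x)"
proof (cases "c = 0")
  case True
  then show ?thesis
    using ln_poly_approximable_poly[of m 0] by simp
next
  case False
  show ?thesis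
    unfolding ln_poly_approximable_def
  proof (intro allI impI)
    fix e :: real
    assume "e > 0"
    then have "e / c\<^sup>2 > 0"
      using False by simp
    then obtain p where p: "weighted_sqnorm m (\<lambda>x. g x - poly p (ln x)) < e / c\<^sup>2"
      using assms(2) unfolding ln_poly_approximable_def by blast
    have "weighted_sqnorm m (\<lambda>x. c * g x - poly (smult c p) (ln x))
        = weighted_sqnorm m (\<lambda>x. c * (g x - poly p (ln x)))"
      by (simp add: algebra_simps)
    also have "\<dots> = c\<^sup>2 * weighted_sqnorm m (\<lambda>x. g x - poly p (ln x))"
      by (rule weighted_sqnorm_cmult)
    also have "\<dots> < e"
      using p False by (simp add: field_simps)
    finally show "\<exists>p. weighted_sqnorm m (\<lambda>x. c * g x - poly p (ln x)) < e"
      by blast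
  qed
qed

lemma ln_poly_approximable_sum:
  "(\<And>i. i \<in> I \<Longrightarrow> log_tempered (f i) \<and> ln_poly_approximable m (f i))
    \<Longrightarrow> ln_poly_approximable m (\<lambda>x. \<Sum>i\<in>I. f i x)"
proof (induction I rule: infinite_finite_induct)
  case (insert a A)
  then show ?case
    by (simp, intro ln_poly_approximable_add log_tempered_sum) auto
qed (use ln_poly_approximable_poly[of m 0] in simp_all)

lemma exp_nonpos_taylor_remainder_le:
  fixes h :: real
  assumes "h \<le> 0"
  shows "\<bar>exp h - (\<Sum>l<N. h ^ l / fact l)\<bar> \<le> \<bar>h\<bar> ^ N / fact N"
proof (cases "N = 0 \<or> h = 0")
  case True
  moreover have "(\<Sum>l<Suc n. (0::real) ^ l / fact l) = 1" for n
    by (simp only: sum.lessThan_Suc_shift) simp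
  ultimately show ?thesis
    using assms by (cases N) auto
next
  case False
  then obtain t where t: "h < t" "t < 0" "exp h = (\<Sum>l<N. exp 0 / fact l * h ^ l) + exp t / fact N * h ^ N"
    using Maclaurin_minus[of h N "\<lambda>n. exp" exp] assms by (auto intro: DERIV_exp)
  then have "\<bar>exp h - (\<Sum>l<N. h ^ l / fact l)\<bar> = exp t * (\<bar>h\<bar> ^ N / fact N)"
    by (simp add: abs_mult power_abs)
  also have "\<dots> \<le> \<bar>h\<bar> ^ N / fact N"
    using t(2) by (intro mult_left_le_one_le) auto
  finally show ?thesis .
qed

lemma fact_add_le: "fact (n + c) \<le> fact n * (n + c) ^ c"
proof (induction c)
  case (Suc c)
  have "fact (n + Suc c) = (n + Suc c) * fact (n + c)"
    by simp
  also have "\<dots> \<le> (n + Suc c) * (fact n * (n + Suc c) ^ c)"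
    by (intro mult_left_mono order.trans[OF Suc.IH] power_mono) auto
  finally show ?case
    by (simp add: algebra_simps)
qed simp

lemma fact_double_le: "(fact (2 * n) :: nat) \<le> 4 ^ n * (fact n)\<^sup>2"
proof -
  have "fact (2 * n) = fact n * fact n * (2 * n choose n)"
    using binomial_fact_lemma[of n "2 * n"] by (simp add: mult_ac)
  also have "\<dots> \<le> fact n * fact n * 4 ^ n"
    using binomial_le_pow2[of "2 * n" n] by (simp add: power_mult)
  finally show ?thesis
    by (simp add: power2_eq_square mult_ac)
qed

lemma fact_ratio_tendsto_0: "(\<lambda>N. fact (2 * N + c) / (16 ^ N * (fact N)\<^sup>2) :: real) \<longlonglongrightarrow> 0"
proof (rule Lim_null_comparison)
  show "\<forall>\<^sub>F N in sequentially. norm (fact (2 * N + c) / (16 ^ N * (fact N)\<^sup>2) :: real) \<le> real (2 * N + c) ^ c / 4 ^ N"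
  proof (intro always_eventually allI)
    fix N :: nat
    have "fact (2 * N + c) \<le> 4 ^ N * (fact N)\<^sup>2 * (2 * N + c) ^ c"
      using order.trans[OF fact_add_le mult_right_mono[OF fact_double_le]] by blast
    then have bound: "(fact (2 * N + c) :: real) \<le> 4 ^ N * (fact N)\<^sup>2 * real (2 * N + c) ^ c"
      using of_nat_mono by fastforce
    have "(16::real) ^ N * (fact N)\<^sup>2 = 4 ^ N * (4 ^ N * (fact N)\<^sup>2)"
      by (simp flip: power_mult_distrib)
    then have "(fact (2 * N + c) :: real) / (16 ^ N * (fact N)\<^sup>2)
        \<le> 4 ^ N * (fact N)\<^sup>2 * real (2 * N + c) ^ c / (4 ^ N * (4 ^ N * (fact N)\<^sup>2))"
      using divide_right_mono[OF bound, of "4 ^ N * (4 ^ N * (fact N)\<^sup>2)"] by simp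
    also have "\<dots> = real (2 * N + c) ^ c / 4 ^ N"
      by simp
    finally show "norm (fact (2 * N + c) / (16 ^ N * (fact N)\<^sup>2) :: real) \<le> real (2 * N + c) ^ c / 4 ^ N"
      by simp
  qed
  show "(\<lambda>N. real (2 * N + c) ^ c / 4 ^ N) \<longlonglongrightarrow> 0"
    by real_asymp
qed

lemma powr_neg_in_unit_interval: "s \<ge> 0 \<Longrightarrow> x \<ge> 1 \<Longrightarrow> x powr (- s) \<in> {0..1::real}"
  using ge_one_powr_ge_zero[of x s] by (simp add: powr_minus_divide)

lemma inverse_power_4_powr_neg_quarter:
  fixes x :: real
  assumes "x > 0"
  shows "1 / (x powr (-1/4)) ^ 4 = x"
proof -
  have "(x powr (-1/4)) ^ 4 = x powr (-1)"
    using assms by (simp add: powr_realpow[symmetric] powr_powr)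
  then show ?thesis
    using assms by (simp add: powr_minus_divide)
qed

lemma log_tempered_powr_quarter_power: "log_tempered (\<lambda>x. (x powr (-1/4)) ^ k)"
proof (rule log_tempered_bounded[of _ 1])
  fix x :: real
  assume "x > 1"
  then show "\<bar>(x powr (-1/4)) ^ k\<bar> \<le> 1"
    using powr_neg_in_unit_interval[of "1/4" x] by (simp add: power_le_one)
qed measurable

text \<open>Truncating the exponential series of \<open>x\<^sup>-\<^sup>1\<^sup>/\<^sup>4 = exp (- log x / 4)\<close> after \<open>N\<close> terms leaves an
  error of at most \<open>log\<^sup>i\<^sup>+\<^sup>N x / (4\<^sup>N N!)\<close>, whose squared norm \<open>(2N + 2i + m)! / (16\<^sup>N N!\<^sup>2)\<close> tends to 0.\<close>
lemma ln_poly_approximable_powr_quarter_ln_power: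
  "ln_poly_approximable m (\<lambda>x. x powr (-1/4) * ln x ^ i)"
  unfolding ln_poly_approximable_def
proof (intro allI impI)
  fix e :: real
  assume "e > 0"
  let ?c = "2 * i + m"
  obtain N where N: "fact (2 * N + ?c) / (16 ^ N * (fact N)\<^sup>2) < e"
    using LIMSEQ_D[OF fact_ratio_tendsto_0[of ?c] \<open>e > 0\<close>] by auto
  define p :: "real poly" where "p = monom 1 i * (\<Sum>l<N. monom ((-1/4) ^ l / fact l) l)"
  have poly_p: "poly p u = u ^ i * (\<Sum>l<N. (- u / 4) ^ l / fact l)" for u
    unfolding p_def poly_mult poly_monom poly_sum by (simp add: power_mult_distrib[symmetric] field_simps)
  define r where "r x = 1 / (4 ^ N * fact N) * ln x ^ (i + N)" for x :: real
  have "weighted_sqnorm m (\<lambda>x. x powr (-1/4) * ln x ^ i - poly p (ln x)) \<le> weighted_sqnorm m r"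
  proof (rule weighted_sqnorm_mono)
    fix x :: real
    assume "x > 1"
    then have "ln x \<ge> 0" "x powr (-1/4) = exp (- ln x / 4)"
      by (simp_all add: powr_def)
    then have "\<bar>x powr (-1/4) * ln x ^ i - poly p (ln x)\<bar>
        = \<bar>ln x ^ i * (exp (- ln x / 4) - (\<Sum>l<N. (- ln x / 4) ^ l / fact l))\<bar>"
      unfolding poly_p by (simp add: algebra_simps)
    also have "\<dots> = ln x ^ i * \<bar>exp (- ln x / 4) - (\<Sum>l<N. (- ln x / 4) ^ l / fact l)\<bar>"
      using \<open>ln x \<ge> 0\<close> by (simp add: abs_mult)
    also have "\<dots> \<le> ln x ^ i * (\<bar>- ln x / 4\<bar> ^ N / fact N)"
      using \<open>ln x \<ge> 0\<close> by (intro mult_left_mono exp_nonpos_taylor_remainder_le) auto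
    also have "\<dots> = \<bar>r x\<bar>"
      unfolding r_def using \<open>ln x \<ge> 0\<close> by (simp add: power_add power_divide field_simps)
    finally show "\<bar>x powr (-1/4) * ln x ^ i - poly p (ln x)\<bar> \<le> \<bar>r x\<bar>" .
  next
    show "log_tempered r"
      unfolding r_def by (intro log_tempered_cmult log_tempered_ln_power)
    show "log_tempered (\<lambda>x. x powr (-1/4) * ln x ^ i - poly p (ln x))"
      using log_tempered_powr_quarter_power[of 1]
      by (intro log_tempered_diff log_tempered_mult log_tempered_ln_power log_tempered_poly_ln) simp_all
  qed
  also have "weighted_sqnorm m r = fact (2 * N + ?c) / (16 ^ N * (fact N)\<^sup>2)"
  proof -
    have "(16::real) ^ N = 4 ^ N * 4 ^ N"
      by (simp flip: power_mult_distrib)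
    then show ?thesis
      unfolding r_def weighted_sqnorm_cmult weighted_sqnorm_ln_power
      by (simp add: power2_eq_square algebra_simps)
  qed
  finally show "\<exists>p. weighted_sqnorm m (\<lambda>x. x powr (-1/4) * ln x ^ i - poly p (ln x)) < e"
    using N by (intro exI[of _ p]) linarith
qed

lemma ln_poly_approximable_powr_quarter_mult:
  assumes "log_tempered g" "ln_poly_approximable m g"
  shows "ln_poly_approximable m (\<lambda>x. x powr (-1/4) * g x)"
proof (rule ln_poly_approximable_closure)
  have quarter: "log_tempered (\<lambda>x. x powr (-1/4))"
    using log_tempered_powr_quarter_power[of 1] by simp
  then show "log_tempered (\<lambda>x. x powr (-1/4) * g x)"
    by (intro log_tempered_mult assms(1))
  fix e :: real
  assume "e > 0"
  then obtain p where p: "weighted_sqnorm m (\<lambda>x. g x - poly p (ln x)) < e"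
    using assms(2) unfolding ln_poly_approximable_def by blast
  let ?h = "\<lambda>x. x powr (-1/4) * poly p (ln x)"
  have "?h = (\<lambda>x. \<Sum>i\<le>degree p. coeff p i * (x powr (-1/4) * ln x ^ i))"
    by (simp add: poly_altdef sum_distrib_left mult_ac)
  then have "ln_poly_approximable m ?h"
    by (simp only:) (intro ln_poly_approximable_sum conjI ln_poly_approximable_cmult log_tempered_cmult
        log_tempered_mult quarter log_tempered_ln_power ln_poly_approximable_powr_quarter_ln_power)
  moreover have "weighted_sqnorm m (\<lambda>x. x powr (-1/4) * g x - ?h x)
      \<le> weighted_sqnorm m (\<lambda>x. g x - poly p (ln x))"
  proof (rule weighted_sqnorm_mono)
    show "log_tempered (\<lambda>x. x powr (-1/4) * g x - ?h x)" "log_tempered (\<lambda>x. g x - poly p (ln x))"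
      by (intro log_tempered_diff log_tempered_mult quarter assms(1) log_tempered_poly_ln)+
    fix x :: real
    assume "x > 1"
    then have "\<bar>x powr (-1/4)\<bar> \<le> 1"
      using powr_neg_in_unit_interval[of "1/4" x] by simp
    moreover have "x powr (-1/4) * g x - ?h x = x powr (-1/4) * (g x - poly p (ln x))"
      by (simp add: algebra_simps)
    ultimately show "\<bar>x powr (-1/4) * g x - ?h x\<bar> \<le> \<bar>g x - poly p (ln x)\<bar>"
      by (simp add: abs_mult mult_left_le_one_le)
  qed
  ultimately show "\<exists>h. log_tempered h \<and> ln_poly_approximable m h
      \<and> weighted_sqnorm m (\<lambda>x. x powr (-1/4) * g x - h x) < e"
    using p quarter by (intro exI[of _ ?h]) (auto intro: log_tempered_mult log_tempered_poly_ln)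
qed

lemma ln_poly_approximable_powr_quarter_power_ln_power:
  "ln_poly_approximable m (\<lambda>x. (x powr (-1/4)) ^ k * ln x ^ j)"
proof (induction k)
  case 0
  show ?case
    using ln_poly_approximable_poly[of m "monom 1 j"] by (simp add: poly_monom)
next
  case (Suc k)
  have "log_tempered (\<lambda>x. (x powr (-1/4)) ^ k * ln x ^ j)"
    by (intro log_tempered_mult log_tempered_powr_quarter_power log_tempered_ln_power)
  from ln_poly_approximable_powr_quarter_mult[OF this Suc.IH]
  show ?case
    by (simp add: mult_ac)
qed

lemma log_tempered_continuous_powr_quarter:
  fixes \<theta> :: "real \<Rightarrow> real"
  assumes cont: "continuous_on UNIV \<theta>"
  shows "log_tempered (\<lambda>x. \<theta> (x powr (-1/4)))"
proof -
  obtain B where B: "\<And>t. t \<in> {0..1} \<Longrightarrow> \<bar>\<theta> t\<bar> \<le> B"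
    using compact_imp_bounded[OF compact_continuous_image[OF continuous_on_subset[OF cont] compact_Icc]]
    unfolding bounded_iff by fastforce
  have "\<theta> \<in> borel_measurable borel"
    using cont by (rule borel_measurable_continuous_onI)
  then show ?thesis
    using B powr_neg_in_unit_interval[of "1/4"] by (intro log_tempered_bounded[of _ B]) auto
qed

text \<open>The substitution \<open>t = x\<^sup>-\<^sup>1\<^sup>/\<^sup>4\<close> maps \<open>(1, \<infinity>)\<close> into \<open>(0, 1)\<close>, so the Weierstrass theorem
  applies to any continuous \<open>\<theta>\<close>.\<close>
lemma ln_poly_approximable_continuous_powr_quarter:
  fixes \<theta> :: "real \<Rightarrow> real"
  assumes cont: "continuous_on UNIV \<theta>"
  shows "ln_poly_approximable m (\<lambda>x. \<theta> (x powr (-1/4)))"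
proof -
  have in_unit: "x powr (-1/4) \<in> {0..1}" if "x > 1" for x :: real
    using powr_neg_in_unit_interval[of "1/4" x] that by simp
  note tempered = log_tempered_continuous_powr_quarter[OF cont]
  show ?thesis
  proof (rule ln_poly_approximable_closure[OF tempered])
    fix e :: real
    assume "e > 0"
    define d where "d = sqrt (e / (2 * fact m))"
    have "d > 0" "d\<^sup>2 * fact m = e / 2"
      using \<open>e > 0\<close> by (simp_all add: d_def)
    obtain P where P: "polynomial_function P" "\<And>t. t \<in> {0..1} \<Longrightarrow> norm (\<theta> t - P t) < d"
      using Stone_Weierstrass_polynomial_function[OF compact_Icc continuous_on_subset[OF cont] \<open>d > 0\<close>, of 0 1]
      by auto
    obtain a n where P_eq: "P = (\<lambda>t. \<Sum>i\<le>n. a i * t ^ i)"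
      using P(1) unfolding real_polynomial_function_eq[symmetric] real_polynomial_function_iff_sum by blast
    let ?h = "\<lambda>x. \<Sum>i\<le>n. a i * ((x powr (-1/4)) ^ i * ln x ^ 0)"
    have "log_tempered ?h"
      by (intro log_tempered_sum log_tempered_cmult log_tempered_mult log_tempered_powr_quarter_power
          log_tempered_ln_power)
    moreover have "ln_poly_approximable m ?h"
      by (intro ln_poly_approximable_sum conjI log_tempered_cmult log_tempered_mult log_tempered_ln_power
          log_tempered_powr_quarter_power ln_poly_approximable_cmult
          ln_poly_approximable_powr_quarter_power_ln_power)
    moreover have "weighted_sqnorm m (\<lambda>x. \<theta> (x powr (-1/4)) - ?h x) \<le> weighted_sqnorm m (\<lambda>x. d)"
    proof (rule weighted_sqnorm_mono)
      show "log_tempered (\<lambda>x. \<theta> (x powr (-1/4)) - ?h x)"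
        by (intro log_tempered_diff tempered \<open>log_tempered ?h\<close>)
      fix x :: real
      assume "x > 1"
      then show "\<bar>\<theta> (x powr (-1/4)) - ?h x\<bar> \<le> \<bar>d\<bar>"
        using P(2)[OF in_unit[OF \<open>x > 1\<close>]] unfolding P_eq by simp
    qed (rule log_tempered_const)
    moreover have "weighted_sqnorm m (\<lambda>x. d) < e"
      using \<open>d\<^sup>2 * fact m = e / 2\<close> \<open>e > 0\<close> by (simp add: weighted_sqnorm_const)
    ultimately show "\<exists>h. log_tempered h \<and> ln_poly_approximable m h
        \<and> weighted_sqnorm m (\<lambda>x. \<theta> (x powr (-1/4)) - h x) < e"
      by (intro exI[of _ ?h]) auto
  qed
qed

lemma isCont_comp_frac:
  fixes f :: "real \<Rightarrow> 'a :: topological_space" and x :: real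
  assumes cont: "\<And>y. isCont f y" and "f 0 = f 1"
  shows "isCont (\<lambda>x. f (frac x)) x"
proof (cases "x \<in> \<int>")
  case False
  then show ?thesis
    using continuous_at_compose[OF continuous_frac[OF False] cont] by (simp add: o_def)
next
  case True
  have "frac x = 0"
    using True by (simp add: frac_unique_iff)
  have "((\<lambda>y. f (y - x)) \<longlongrightarrow> f (x - x)) (at_right x)"
    by (intro isCont_tendsto_compose[OF cont] tendsto_intros)
  moreover have "\<forall>\<^sub>F y in at_right x. y \<in> {x<..<x + 1}"
    by (rule eventually_at_right_real) simp
  then have "\<forall>\<^sub>F y in at_right x. frac y = y - x"
    by eventually_elim (use True in \<open>simp add: frac_unique_iff\<close>)
  then have "\<forall>\<^sub>F y in at_right x. f (y - x) = f (frac y)"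
    by eventually_elim simp
  ultimately have right: "continuous (at_right x) (\<lambda>x. f (frac x))"
    unfolding continuous_within \<open>frac x = 0\<close> by (auto intro: Lim_transform_eventually)
  have "((\<lambda>y. f (y - x + 1)) \<longlongrightarrow> f (x - x + 1)) (at_left x)"
    by (intro isCont_tendsto_compose[OF cont] tendsto_intros)
  moreover have "\<forall>\<^sub>F y in at_left x. y \<in> {x - 1<..<x}"
    by (rule eventually_at_left_real) simp
  then have "\<forall>\<^sub>F y in at_left x. frac y = y - x + 1"
    by eventually_elim (use True in \<open>simp add: frac_unique_iff Ints_diff\<close>)
  then have "\<forall>\<^sub>F y in at_left x. f (y - x + 1) = f (frac y)"
    by eventually_elim simp
  ultimately have left: "continuous (at_left x) (\<lambda>x. f (frac x))"
    unfolding continuous_within \<open>frac x = 0\<close> \<open>f 0 = f 1\<close> by (auto intro: Lim_transform_eventually)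
  from left right show ?thesis
    using continuous_at_split by blast
qed

text \<open>A continuous minorant of \<open>{x}\<close> that agrees with it outside \<open>\<Union>k. (k - 1/(n+2), k)\<close>.\<close>
definition frac_tent :: "nat \<Rightarrow> real \<Rightarrow> real" where
  "frac_tent n x = min (frac x) (real (n + 1) * (1 - frac x))"

definition cutoff :: "real \<Rightarrow> real \<Rightarrow> real" where
  "cutoff K x = max 0 (min 1 (K - x))"

lemma isCont_frac_tent: "isCont (frac_tent n) x"
  unfolding frac_tent_def[abs_def]
  by (rule isCont_comp_frac[where f = "\<lambda>y. min y (real (n + 1) * (1 - y))"]) (auto intro!: continuous_intros)

lemma frac_tent_bounds: "0 \<le> frac_tent n x" "frac_tent n x \<le> frac x"
  unfolding frac_tent_def using frac_lt_1[of x] by auto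

lemma weighted_sqnorm_tendsto_0:
  assumes tempered: "\<And>n. log_tempered (f n)" and bounded: "\<And>n x. x > 1 \<Longrightarrow> \<bar>f n x\<bar> \<le> 1"
    and lim: "\<And>x. x > 1 \<Longrightarrow> (\<lambda>n. f n x) \<longlonglongrightarrow> 0"
  shows "(\<lambda>n. weighted_sqnorm m (f n)) \<longlonglongrightarrow> 0"
proof -
  let ?F = "\<lambda>n x. indicator {1<..} x *\<^sub>R (f n x * f n x * ln x ^ m / x\<^sup>2)"
  have "(\<lambda>n. integral\<^sup>L lborel (?F n)) \<longlonglongrightarrow> integral\<^sup>L lborel (\<lambda>x::real. 0::real)"
  proof (rule integral_dominated_convergence[where w = "\<lambda>x. indicator {1<..} x *\<^sub>R (ln x ^ m / x\<^sup>2)"])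
    show "?F n \<in> borel_measurable lborel" for n
      using log_tempered_measurable[OF tempered[of n]] by measurable
    show "integrable lborel (\<lambda>x::real. indicator {1<..} x *\<^sub>R (ln x ^ m / x\<^sup>2))"
      using set_integrable_ln_moment[of m] unfolding set_integrable_def .
    show "AE x in lborel. (\<lambda>n. ?F n x) \<longlonglongrightarrow> 0"
    proof (rule AE_I2)
      fix x :: real
      show "(\<lambda>n. ?F n x) \<longlonglongrightarrow> 0"
        using tendsto_mult[OF lim lim, of x] by (cases "x > 1") (auto intro!: tendsto_eq_intros)
    qed
    show "AE x in lborel. norm (?F n x) \<le> indicator {1<..} x *\<^sub>R (ln x ^ m / x\<^sup>2)" for n
    proof (rule AE_I2)
      fix x :: real
      have "\<bar>f n x * f n x\<bar> * (ln x ^ m / x\<^sup>2) \<le> 1 * (ln x ^ m / x\<^sup>2)" if "x > 1"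
      proof (rule mult_right_mono)
        show "\<bar>f n x * f n x\<bar> \<le> 1"
          unfolding abs_mult using bounded[OF that, of n] by (intro mult_le_one) auto
      qed (use that in simp)
      then show "norm (?F n x) \<le> indicator {1<..} x *\<^sub>R (ln x ^ m / x\<^sup>2)"
        by (auto simp: abs_mult indicator_def)
    qed
  qed simp
  then show ?thesis
    unfolding weighted_sqnorm_def weighted_inner_def set_lebesgue_integral_def by simp
qed

lemma frac_tent_cutoff_bounds:
  "0 \<le> frac_tent n x * cutoff K x" "frac_tent n x * cutoff K x \<le> frac x"
proof -
  have "0 \<le> cutoff K x" "cutoff K x \<le> 1"
    by (auto simp: cutoff_def)
  then show "0 \<le> frac_tent n x * cutoff K x" "frac_tent n x * cutoff K x \<le> frac x"
    using frac_tent_bounds[of n x] mult_left_le_one_le[of "frac_tent n x" "cutoff K x"]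
    by (auto simp: mult.commute)
qed

lemma eventually_frac_tent_cutoff_eq: "\<forall>\<^sub>F n in sequentially. frac_tent n x * cutoff (real n) x = frac x"
proof -
  obtain N :: nat where "real N > max (frac x / (1 - frac x)) (x + 1)"
    using reals_Archimedean2 by blast
  then have N: "real N > frac x / (1 - frac x)" "real N \<ge> x + 1"
    by auto
  show ?thesis
    using eventually_ge_at_top[of N]
  proof eventually_elim
    case (elim n)
    have "frac x / (1 - frac x) < real n"
      using N(1) elim by (meson of_nat_le_iff order.strict_trans2)
    then have "frac x < real n * (1 - frac x)"
      using frac_lt_1[of x] by (simp add: field_simps)
    then have "frac x < real (n + 1) * (1 - frac x)"
      using frac_lt_1[of x] by (simp add: distrib_right)
    moreover have "cutoff (real n) x = 1"
      using N(2) elim unfolding cutoff_def by auto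
    ultimately show ?case
      by (simp add: frac_tent_def)
  qed
qed

lemma frac_tent_cutoff_approximation:
  "(\<lambda>n. weighted_sqnorm m (\<lambda>x. frac x - frac_tent n x * cutoff (real n) x)) \<longlonglongrightarrow> 0"
proof (rule weighted_sqnorm_tendsto_0)
  show bounded: "\<bar>frac x - frac_tent n x * cutoff (real n) x\<bar> \<le> 1" for n x
    using frac_tent_cutoff_bounds[of n x "real n"] frac_lt_1[of x] frac_ge_0[of x] by linarith
  have "frac_tent n \<in> borel_measurable borel" for n
    by (intro borel_measurable_continuous_onI continuous_at_imp_continuous_on ballI isCont_frac_tent)
  then show "log_tempered (\<lambda>x. frac x - frac_tent n x * cutoff (real n) x)" for n
    using bounded by (intro log_tempered_bounded[of _ 1]) (auto simp: cutoff_def[abs_def])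
  fix x :: real
  have "\<forall>\<^sub>F n in sequentially. frac x - frac_tent n x * cutoff (real n) x = 0"
    using eventually_frac_tent_cutoff_eq[of x] by eventually_elim simp
  then show "(\<lambda>n. frac x - frac_tent n x * cutoff (real n) x) \<longlonglongrightarrow> 0"
    by (rule tendsto_eventually)
qed

lemma continuous_on_frac_tent_cutoff_inverse_power:
  "continuous_on UNIV (\<lambda>t. frac_tent n (1 / t ^ 4) * cutoff K (1 / t ^ 4))"
proof (intro continuous_at_imp_continuous_on ballI)
  fix t :: real
  show "isCont (\<lambda>t. frac_tent n (1 / t ^ 4) * cutoff K (1 / t ^ 4)) t"
  proof (cases "t = 0")
    case False
    then show ?thesis
      by (auto intro!: continuous_intros continuous_at_compose[OF _ isCont_frac_tent, unfolded o_def]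
          simp: cutoff_def[abs_def])
  next
    case True
    have "filterlim (\<lambda>t::real. 1 / t ^ 4) at_top (at 0)"
      by real_asymp
    then have "\<forall>\<^sub>F t in at 0. 1 / t ^ 4 > K"
      by (rule filterlim_at_top_dense[THEN iffD1, rule_format])
    then have "\<forall>\<^sub>F t in at 0. frac_tent n (1 / t ^ 4) * cutoff K (1 / t ^ 4) = 0"
      by eventually_elim (simp add: cutoff_def)
    then have "((\<lambda>t. frac_tent n (1 / t ^ 4) * cutoff K (1 / t ^ 4)) \<longlongrightarrow> 0) (at 0)"
      by (rule tendsto_eventually)
    then show ?thesis
      using True by (simp add: isCont_def frac_tent_def)
  qed
qed

lemma ln_poly_approximable_frac: "ln_poly_approximable m frac"
proof (rule ln_poly_approximable_closure[OF log_tempered_frac])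
  fix e :: real
  assume "e > 0"
  then obtain n where n: "weighted_sqnorm m (\<lambda>x. frac x - frac_tent n x * cutoff (real n) x) < e"
    using LIMSEQ_D[OF frac_tent_cutoff_approximation \<open>e > 0\<close>] weighted_sqnorm_nonneg by fastforce
  let ?\<theta> = "\<lambda>t. frac_tent n (1 / t ^ 4) * cutoff (real n) (1 / t ^ 4)"
  have h_eq: "?\<theta> (x powr (-1/4)) = frac_tent n x * cutoff (real n) x" if "x > 1" for x
    using that inverse_power_4_powr_neg_quarter[of x] by simp
  have "log_tempered (\<lambda>x. ?\<theta> (x powr (-1/4)))"
    by (rule log_tempered_continuous_powr_quarter[OF continuous_on_frac_tent_cutoff_inverse_power])
  moreover have "ln_poly_approximable m (\<lambda>x. ?\<theta> (x powr (-1/4)))"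
    by (rule ln_poly_approximable_continuous_powr_quarter[OF continuous_on_frac_tent_cutoff_inverse_power])
  moreover have "weighted_sqnorm m (\<lambda>x. frac x - ?\<theta> (x powr (-1/4)))
      = weighted_sqnorm m (\<lambda>x. frac x - frac_tent n x * cutoff (real n) x)"
  proof (rule weighted_sqnorm_cong)
    fix x :: real
    assume "x > 1"
    then show "frac x - ?\<theta> (x powr (-1/4)) = frac x - frac_tent n x * cutoff (real n) x"
      by (simp only: h_eq)
  qed
  ultimately show "\<exists>h. log_tempered h \<and> ln_poly_approximable m h \<and> weighted_sqnorm m (\<lambda>x. frac x - h x) < e"
    using n by auto
qed

section \<open>Orthogonality of the Laguerre polynomials\<close>

definition laguerre_coeff :: "nat \<Rightarrow> nat \<Rightarrow> nat \<Rightarrow> real" where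
  "laguerre_coeff n m k = real ((n + m) choose (n - k)) * (-1) ^ k / fact k"

definition laguerre_poly :: "nat \<Rightarrow> nat \<Rightarrow> real poly" where
  "laguerre_poly n m = (\<Sum>k\<le>n. monom (laguerre_coeff n m k) k)"

lemma laguerre_eq: "laguerre n m u = (\<Sum>k\<le>n. laguerre_coeff n m k * u ^ k)"
  unfolding laguerre_def laguerre_coeff_def atLeast0AtMost by simp

lemma poly_laguerre_poly: "poly (laguerre_poly n m) u = laguerre n m u"
  unfolding laguerre_poly_def laguerre_eq by (simp add: poly_sum poly_monom)

lemma coeff_laguerre_poly: "coeff (laguerre_poly n m) j = (if j \<le> n then laguerre_coeff n m j else 0)"
  unfolding laguerre_poly_def coeff_sum by (auto simp: sum.delta)

lemma degree_laguerre_poly: "degree (laguerre_poly n m) \<le> n"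
  unfolding laguerre_poly_def by (intro degree_sum_le) (auto intro: order.trans[OF degree_monom_le])

lemma laguerre_coeff_top_nonzero: "laguerre_coeff n m n \<noteq> 0"
  unfolding laguerre_coeff_def by simp

lemma poly_in_laguerre_span:
  fixes p :: "real poly"
  assumes "degree p \<le> N"
  shows "\<exists>b. p = (\<Sum>k\<le>N. smult (b k) (laguerre_poly k m))"
  using assms
proof (induction N arbitrary: p)
  case 0
  then have "p = [:coeff p 0:]"
    by (metis degree_0_id le_zero_eq)
  moreover have "laguerre_poly 0 m = 1"
    unfolding laguerre_poly_def laguerre_coeff_def by (simp add: monom_0 one_pCons)
  ultimately show ?case
    by (intro exI[of _ "\<lambda>k. coeff p 0"]) simp
next
  case (Suc N)
  define c where "c = coeff p (Suc N) / laguerre_coeff (Suc N) m (Suc N)"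
  define p' where "p' = p - smult c (laguerre_poly (Suc N) m)"
  have "degree p' \<le> Suc N"
    unfolding p'_def using Suc.prems degree_laguerre_poly[of "Suc N" m]
    by (intro degree_diff_le) (auto intro: order.trans[OF degree_smult_le])
  moreover have "coeff p' (Suc N) = 0"
    unfolding p'_def c_def using laguerre_coeff_top_nonzero[of "Suc N" m] by (simp add: coeff_laguerre_poly)
  ultimately have "degree p' \<le> N"
    by (metis le_SucE leading_coeff_0_iff degree_0 zero_le)
  then obtain b where "p' = (\<Sum>k\<le>N. smult (b k) (laguerre_poly k m))"
    using Suc.IH by blast
  then have "p = (\<Sum>k\<le>Suc N. smult ((b(Suc N := c)) k) (laguerre_poly k m))"
    unfolding p'_def by (simp add: algebra_simps)
  then show ?case
    by blast
qed

lemma poly_eq_laguerre_sum: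
  fixes p :: "real poly"
  assumes "degree p < N"
  obtains b where "\<And>u. poly p u = (\<Sum>k<N. b k * laguerre k m u)"
proof -
  obtain N' where N: "N = Suc N'"
    using assms by (cases N) auto
  obtain b where "p = (\<Sum>k\<le>N'. smult (b k) (laguerre_poly k m))"
    using poly_in_laguerre_span[of p N' m] assms N by auto
  then have "poly p u = (\<Sum>k<N. b k * laguerre k m u)" for u
    unfolding N lessThan_Suc_atMost by (simp add: poly_sum poly_laguerre_poly)
  then show ?thesis
    using that by blast
qed

lemma alternating_binomial_sum_Suc:
  fixes F :: "nat \<Rightarrow> real"
  shows "(\<Sum>i\<le>Suc k. real (Suc k choose i) * (-1) ^ i * F i)
       = (\<Sum>i\<le>k. real (k choose i) * (-1) ^ i * F i) - (\<Sum>i\<le>k. real (k choose i) * (-1) ^ i * F (Suc i))"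
proof -
  define A where "A = (\<Sum>i\<le>k. real (k choose i) * (-1) ^ i * F i)"
  have "A = (\<Sum>i\<le>Suc k. real (k choose i) * (-1) ^ i * F i)"
    unfolding A_def by simp
  also have "\<dots> = F 0 - (\<Sum>i\<le>k. real (k choose Suc i) * (-1) ^ i * F (Suc i))"
    by (subst sum.atMost_Suc_shift) (simp add: sum_negf)
  finally have shifted: "(\<Sum>i\<le>k. real (k choose Suc i) * (-1) ^ i * F (Suc i)) = F 0 - A"
    by simp
  have "(\<Sum>i\<le>Suc k. real (Suc k choose i) * (-1) ^ i * F i)
      = F 0 + (\<Sum>i\<le>k. - (real (k choose i) * (-1) ^ i * F (Suc i)) - real (k choose Suc i) * (-1) ^ i * F (Suc i))"
    by (subst sum.atMost_Suc_shift) (simp add: ring_distribs)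
  also have "\<dots> = F 0 - (\<Sum>i\<le>k. real (k choose i) * (-1) ^ i * F (Suc i))
        - (\<Sum>i\<le>k. real (k choose Suc i) * (-1) ^ i * F (Suc i))"
    by (simp add: sum_subtractf sum_negf)
  finally show ?thesis
    unfolding shifted A_def by simp
qed

text \<open>Up to the sign \<open>(-1)\<^sup>k\<close>, the \<open>k\<close>-th forward difference of \<open>i \<mapsto> (a + i)\<^sup>(\<^sup>j\<^sup>)\<close>; it vanishes
  for \<open>j < k\<close> because the rising factorial is a polynomial of degree \<open>j\<close> in \<open>i\<close>.\<close>
definition pochhammer_diff :: "nat \<Rightarrow> real \<Rightarrow> nat \<Rightarrow> real" where
  "pochhammer_diff k a j = (\<Sum>i\<le>k. real (k choose i) * (-1) ^ i * pochhammer (a + real i) j)"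

lemma pochhammer_diff_Suc:
  "pochhammer_diff (Suc k) a j = pochhammer_diff k a j - pochhammer_diff k (a + 1) j"
  unfolding pochhammer_diff_def by (subst alternating_binomial_sum_Suc) (simp add: algebra_simps)

lemma pochhammer_diff_Suc_0: "pochhammer_diff (Suc k) a 0 = 0"
  using choose_alternating_sum[of "Suc k"] unfolding pochhammer_diff_def by (simp add: mult.commute)

lemma pochhammer_diff_Suc_Suc:
  "pochhammer_diff (Suc k) a (Suc j) = - (real j + 1) * pochhammer_diff k (a + 1) j"
proof -
  have step: "pochhammer (a + real i) (Suc j) - pochhammer (a + 1 + real i) (Suc j)
      = - (real j + 1) * pochhammer (a + 1 + real i) j" for i
    using pochhammer_rec[of "a + real i" j] pochhammer_Suc[of "a + 1 + real i" j]
    by (simp add: algebra_simps)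
  have "pochhammer_diff k a (Suc j) - pochhammer_diff k (a + 1) (Suc j)
      = (\<Sum>i\<le>k. real (k choose i) * (-1) ^ i
          * (pochhammer (a + real i) (Suc j) - pochhammer (a + 1 + real i) (Suc j)))"
    unfolding pochhammer_diff_def by (simp add: sum_subtractf algebra_simps)
  also have "\<dots> = - (real j + 1) * pochhammer_diff k (a + 1) j"
    unfolding step pochhammer_diff_def by (simp add: sum_distrib_left algebra_simps)
  finally show ?thesis
    by (simp add: pochhammer_diff_Suc)
qed

lemma pochhammer_diff_eq_0: "j < k \<Longrightarrow> pochhammer_diff k a j = 0"
proof (induction k arbitrary: a j)
  case (Suc k)
  then show ?case
    by (cases j) (simp_all add: pochhammer_diff_Suc_0 pochhammer_diff_Suc_Suc)
qed simp

lemma pochhammer_diff_diag: "pochhammer_diff k a k = (-1) ^ k * fact k"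
proof (induction k arbitrary: a)
  case 0
  then show ?case
    by (simp add: pochhammer_diff_def)
next
  case (Suc k)
  then show ?case
    by (simp add: pochhammer_diff_Suc_Suc algebra_simps)
qed

lemma laguerre_coeff_mult_fact:
  assumes "i \<le> k"
  shows "laguerre_coeff k m i * fact (i + j + m)
    = fact (k + m) / fact k * (real (k choose i) * (-1) ^ i * pochhammer (real m + 1 + real i) j)"
proof -
  have "(fact (m + i + j) :: real) = pochhammer 1 (m + i + j)"
    by (rule pochhammer_fact)
  also have "\<dots> = fact (m + i) * pochhammer (1 + real (m + i)) j"
    by (simp add: pochhammer_product' pochhammer_fact)
  finally have fact_eq: "fact (i + j + m) = fact (m + i) * pochhammer (real m + 1 + real i) j"
    by (simp add: algebra_simps)
  have "real ((k + m) choose (k - i)) = fact (k + m) / (fact (k - i) * fact (m + i))"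
    using assms by (subst binomial_fact) (auto simp: algebra_simps)
  moreover have "real (k choose i) = fact k / (fact i * fact (k - i))"
    using assms by (rule binomial_fact)
  ultimately show ?thesis
    unfolding laguerre_coeff_def fact_eq by (simp only:) (simp add: field_simps)
qed

lemma set_integral_laguerre_ln_moment:
  "set_lebesgue_integral lborel {1<..} (\<lambda>x::real. laguerre k m (ln x) * ln x ^ j * ln x ^ m / x\<^sup>2)
    = fact (k + m) / fact k * pochhammer_diff k (real m + 1) j"
proof -
  have "laguerre k m (ln x) * ln x ^ j * ln x ^ m / x\<^sup>2 = (\<Sum>i\<le>k. laguerre_coeff k m i * (ln x ^ (i + j + m) / x\<^sup>2))"
    for x :: real
    unfolding laguerre_eq by (simp add: sum_distrib_left sum_distrib_right sum_divide_distrib power_add mult_ac)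
  then have "set_lebesgue_integral lborel {1<..} (\<lambda>x::real. laguerre k m (ln x) * ln x ^ j * ln x ^ m / x\<^sup>2)
      = (\<Sum>i\<le>k. laguerre_coeff k m i * fact (i + j + m))"
    by (simp only: set_integral_sum set_integrable_mult_right set_integrable_ln_moment
        set_integral_mult_right set_integral_ln_moment)
  also have "\<dots> = fact (k + m) / fact k * pochhammer_diff k (real m + 1) j"
    unfolding pochhammer_diff_def sum_distrib_left by (rule sum.cong) (simp_all add: laguerre_coeff_mult_fact)
  finally show ?thesis .
qed

lemma weighted_inner_laguerre_le:
  assumes "l \<le> k"
  shows "weighted_inner m (\<lambda>x. laguerre k m (ln x)) (\<lambda>x. laguerre l m (ln x))
    = (if k = l then fact (k + m) / fact k else 0)"
proof -
  have "weighted_inner m (\<lambda>x. laguerre k m (ln x)) (\<lambda>x. laguerre l m (ln x))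
      = set_lebesgue_integral lborel {1<..}
          (\<lambda>x::real. \<Sum>j\<le>l. laguerre_coeff l m j * (laguerre k m (ln x) * ln x ^ j * ln x ^ m / x\<^sup>2))"
    unfolding weighted_inner_def laguerre_eq[of l]
    by (simp add: sum_distrib_left sum_distrib_right sum_divide_distrib mult_ac)
  also have "\<dots> = (\<Sum>j\<le>l. laguerre_coeff l m j * (fact (k + m) / fact k * pochhammer_diff k (real m + 1) j))"
  proof (subst set_integral_sum)
    show "set_integrable lborel {1<..}
        (\<lambda>x::real. laguerre_coeff l m j * (laguerre k m (ln x) * ln x ^ j * ln x ^ m / x\<^sup>2))" for j
      by (intro set_integrable_mult_right set_integrable_weighted log_tempered_laguerre_ln log_tempered_ln_power)
  qed (simp only: set_integral_mult_right set_integral_laguerre_ln_moment)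
  also have "\<dots> = (if k = l then fact (k + m) / fact k else 0)"
  proof (cases "l = k")
    case True
    have "(\<Sum>j\<le>k. laguerre_coeff k m j * (fact (k + m) / fact k * pochhammer_diff k (real m + 1) j))
        = (\<Sum>j\<in>{k}. laguerre_coeff k m j * (fact (k + m) / fact k * pochhammer_diff k (real m + 1) j))"
      by (rule sum.mono_neutral_right) (auto simp: pochhammer_diff_eq_0)
    then show ?thesis
      using True by (simp add: pochhammer_diff_diag laguerre_coeff_def)
  qed (use assms in \<open>simp add: pochhammer_diff_eq_0\<close>)
  finally show ?thesis .
qed

lemma weighted_inner_laguerre:
  "weighted_inner m (\<lambda>x. laguerre k m (ln x)) (\<lambda>x. laguerre l m (ln x))
    = (if k = l then fact (k + m) / fact k else 0)"
  using weighted_inner_laguerre_le[of l k m] weighted_inner_laguerre_le[of k l m]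
  by (cases "l \<le> k") (auto simp: weighted_inner_commute)

section \<open>Convergence of the Laguerre series of the fractional part\<close>

lemma weighted_inner_diff_left:
  assumes "log_tempered f" "log_tempered g" "log_tempered h"
  shows "weighted_inner m (\<lambda>x. f x - g x) h = weighted_inner m f h - weighted_inner m g h"
  unfolding weighted_inner_def
  using set_integral_diff(2)[OF set_integrable_weighted[OF assms(1,3)] set_integrable_weighted[OF assms(2,3)]]
  by (simp add: left_diff_distrib diff_divide_distrib)

lemma weighted_inner_sum_left:
  assumes "\<And>k. k \<in> I \<Longrightarrow> log_tempered (g k)" "log_tempered h"
  shows "weighted_inner m (\<lambda>x. \<Sum>k\<in>I. b k * g k x) h = (\<Sum>k\<in>I. b k * weighted_inner m (g k) h)"
proof -
  have eq: "(\<Sum>k\<in>I. b k * g k x) * h x * ln x ^ m / x\<^sup>2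
      = (\<Sum>k\<in>I. b k * (g k x * h x * ln x ^ m / x\<^sup>2))" for x
    by (simp add: sum_distrib_left sum_distrib_right sum_divide_distrib mult_ac)
  have "set_integrable lborel {1<..} (\<lambda>x. b k * (g k x * h x * ln x ^ m / x\<^sup>2))" if "k \<in> I" for k
    using assms that by (intro set_integrable_mult_right set_integrable_weighted) auto
  then show ?thesis
    unfolding weighted_inner_def eq by (simp only: set_integral_sum set_integral_mult_right)
qed

lemma weighted_sqnorm_diff:
  assumes "log_tempered f" "log_tempered g"
  shows "weighted_sqnorm m (\<lambda>x. f x - g x) = weighted_sqnorm m f - 2 * weighted_inner m g f + weighted_sqnorm m g"
proof -
  have diff: "log_tempered (\<lambda>x. f x - g x)"
    by (intro log_tempered_diff assms)
  have "weighted_sqnorm m (\<lambda>x. f x - g x)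
      = weighted_inner m f (\<lambda>x. f x - g x) - weighted_inner m g (\<lambda>x. f x - g x)"
    unfolding weighted_sqnorm_def by (rule weighted_inner_diff_left[OF assms diff])
  also have "weighted_inner m f (\<lambda>x. f x - g x) = weighted_sqnorm m f - weighted_inner m g f"
    unfolding weighted_inner_commute[of m f "\<lambda>x. f x - g x"] weighted_sqnorm_def
    by (rule weighted_inner_diff_left[OF assms assms(1)])
  also have "weighted_inner m g (\<lambda>x. f x - g x) = weighted_inner m f g - weighted_sqnorm m g"
    unfolding weighted_inner_commute[of m g "\<lambda>x. f x - g x"] weighted_sqnorm_def
    by (rule weighted_inner_diff_left[OF assms assms(2)])
  finally show ?thesis
    by (simp add: weighted_inner_commute[of m f g])
qed

lemma weighted_inner_laguerre_frac:
  "weighted_inner m (\<lambda>x. laguerre k m (ln x)) frac = fact (k + m) / fact k * (- ((-1) ^ k) * ell k m)"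
proof -
  have "fact m * real ((k + m) choose m) = fact (k + m) / fact k"
    by (subst binomial_fact) (auto simp: field_simps)
  moreover have "weighted_inner m (\<lambda>x. laguerre k m (ln x)) frac
      = set_lebesgue_integral lborel {1<..} (\<lambda>x::real. frac x * ln x ^ m * laguerre k m (ln x) / x ^ 2)"
    unfolding weighted_inner_def by (intro set_lebesgue_integral_cong) (auto simp: mult_ac)
  ultimately show ?thesis
    using frac_laguerre_coefficient[of m k] by (simp add: field_simps)
qed

lemma weighted_sqnorm_frac_minus_laguerre_sum:
  fixes b :: "nat \<Rightarrow> real"
  shows "weighted_sqnorm m (\<lambda>x. frac x - (\<Sum>k<N. b k * laguerre k m (ln x)))
     = weighted_sqnorm m frac - 2 * (\<Sum>k<N. b k * (fact (k + m) / fact k) * (- ((-1) ^ k) * ell k m))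
       + (\<Sum>k<N. fact (k + m) / fact k * (b k)\<^sup>2)"
proof -
  define h where "h k = fact (k + m) / (fact k :: real)" for k
  define c where "c k = - ((-1) ^ k) * ell k m" for k
  define S where "S x = (\<Sum>k<N. b k * laguerre k m (ln x))" for x
  have tempered: "log_tempered S"
    unfolding S_def by (intro log_tempered_sum log_tempered_cmult log_tempered_laguerre_ln)
  have S_frac: "weighted_inner m S frac = (\<Sum>k<N. b k * h k * c k)"
    unfolding S_def
    by (simp add: weighted_inner_sum_left log_tempered_laguerre_ln log_tempered_frac
        weighted_inner_laguerre_frac h_def c_def mult_ac)
  have laguerre_S: "weighted_inner m (\<lambda>x. laguerre k m (ln x)) S = (if k < N then b k * h k else 0)" for k
  proof -
    have "weighted_inner m (\<lambda>x. laguerre k m (ln x)) S = weighted_inner m S (\<lambda>x. laguerre k m (ln x))"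
      by (rule weighted_inner_commute)
    also have "\<dots> = (\<Sum>l<N. b l * (if l = k then h l else 0))"
      unfolding S_def h_def by (simp add: weighted_inner_sum_left log_tempered_laguerre_ln weighted_inner_laguerre)
    also have "\<dots> = (if k < N then b k * h k else 0)"
      by (simp add: if_distrib sum.delta cong: if_cong)
    finally show ?thesis .
  qed
  have "weighted_inner m S S = (\<Sum>k<N. b k * weighted_inner m (\<lambda>x. laguerre k m (ln x)) S)"
    using weighted_inner_sum_left[of "{..<N}" "\<lambda>k x. laguerre k m (ln x)" S m b]
    by (simp add: log_tempered_laguerre_ln tempered flip: S_def)
  then have S_S: "weighted_inner m S S = (\<Sum>k<N. h k * (b k)\<^sup>2)"
    by (simp add: laguerre_S power2_eq_square mult_ac)
  have "weighted_sqnorm m (\<lambda>x. frac x - S x)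
      = weighted_sqnorm m frac - 2 * weighted_inner m S frac + weighted_inner m S S"
    using weighted_sqnorm_diff[OF log_tempered_frac tempered] by (simp add: weighted_sqnorm_def)
  then show ?thesis
    unfolding S_frac S_S
    by (simp add: S_def h_def c_def)
qed

lemma laguerre_partial_sum_minimal:
  fixes b :: "nat \<Rightarrow> real"
  shows "weighted_sqnorm m (\<lambda>x. frac x - (\<Sum>k<N. - ((-1) ^ k) * ell k m * laguerre k m (ln x)))
      \<le> weighted_sqnorm m (\<lambda>x. frac x - (\<Sum>k<N. b k * laguerre k m (ln x)))"
proof -
  define h where "h k = (fact (k + m) / fact k :: real)" for k
  define c where "c k = - ((-1) ^ k) * ell k m" for k
  have "weighted_sqnorm m (\<lambda>x. frac x - (\<Sum>k<N. b k * laguerre k m (ln x)))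
      - weighted_sqnorm m (\<lambda>x. frac x - (\<Sum>k<N. c k * laguerre k m (ln x)))
      = (\<Sum>k<N. h k * (b k - c k)\<^sup>2)"
    unfolding weighted_sqnorm_frac_minus_laguerre_sum h_def[symmetric] c_def[symmetric]
    by (simp add: sum_subtractf[symmetric] sum_distrib_left power2_eq_square algebra_simps
        sum.distrib[symmetric])
  moreover have "(\<Sum>k<N. h k * (b k - c k)\<^sup>2) \<ge> 0"
    by (intro sum_nonneg mult_nonneg_nonneg) (auto simp: h_def)
  ultimately show ?thesis
    unfolding c_def by simp
qed

lemma laguerre_partial_sums_tendsto:
  "(\<lambda>N. weighted_sqnorm m (\<lambda>x. frac x - (\<Sum>k<N. - ((-1) ^ k) * ell k m * laguerre k m (ln x)))) \<longlonglongrightarrow> 0"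
proof (rule LIMSEQ_I)
  fix e :: real
  assume "e > 0"
  then obtain p where p: "weighted_sqnorm m (\<lambda>x. frac x - poly p (ln x)) < e"
    using ln_poly_approximable_frac[of m] unfolding ln_poly_approximable_def by blast
  have "weighted_sqnorm m (\<lambda>x. frac x - (\<Sum>k<N. - ((-1) ^ k) * ell k m * laguerre k m (ln x))) < e"
    if "N \<ge> Suc (degree p)" for N
  proof -
    have "degree p < N"
      using that by simp
    then obtain b where b: "\<And>u. poly p u = (\<Sum>k<N. b k * laguerre k m u)"
      using poly_eq_laguerre_sum[where m = m] by blast
    show ?thesis
      using laguerre_partial_sum_minimal[of m N b] p unfolding b[symmetric] by linarith
  qed
  then show "\<exists>N0. \<forall>N\<ge>N0. norm (weighted_sqnorm m
      (\<lambda>x. frac x - (\<Sum>k<N. - ((-1) ^ k) * ell k m * laguerre k m (ln x))) - 0) < e"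
    using weighted_sqnorm_nonneg by auto
qed

lemma set_integral_weighted_square:
  "set_lebesgue_integral lborel {1<..} (\<lambda>x::real. (g x)\<^sup>2 * ln x ^ m / (fact m * x ^ 2))
    = weighted_sqnorm m g / fact m"
  unfolding weighted_sqnorm_def weighted_inner_def
  by (subst set_integral_divide_zero[symmetric], rule set_lebesgue_integral_cong)
    (auto simp: power2_eq_square field_simps)

theorem mainTheorem9:
  fixes m n :: nat
  shows "set_integrable lborel {1<..}
           (\<lambda>x::real. frac x * ln x ^ m * laguerre n m (ln x) / x ^ 2)
       \<and> (1 / (fact m * real ((n + m) choose m))) *
           set_lebesgue_integral lborel {1<..}
             (\<lambda>x::real. frac x * ln x ^ m * laguerre n m (ln x) / x ^ 2)
         = - ((-1) ^ n) * ell n m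
       \<and> set_integrable lborel {1<..}
           (\<lambda>x::real. (frac x)\<^sup>2 * ln x ^ m / (fact m * x ^ 2))
       \<and> (\<lambda>N. set_lebesgue_integral lborel {1<..}
             (\<lambda>x::real. (frac x - (\<Sum>k<N. - ((-1) ^ k) * ell k m * laguerre k m (ln x)))\<^sup>2
                        * ln x ^ m / (fact m * x ^ 2)))
         \<longlonglongrightarrow> 0"
proof (intro conjI)
  show "set_integrable lborel {1<..} (\<lambda>x::real. (frac x)\<^sup>2 * ln x ^ m / (fact m * x ^ 2))"
  proof -
    have "set_integrable lborel {1<..} (\<lambda>x::real. frac x * frac x * ln x ^ m / x\<^sup>2 / fact m)"
      by (intro set_integrable_divide set_integrable_weighted log_tempered_frac)
    then show ?thesis
      by (simp add: power2_eq_square mult_ac)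
  qed
  show "(\<lambda>N. set_lebesgue_integral lborel {1<..}
      (\<lambda>x::real. (frac x - (\<Sum>k<N. - ((-1) ^ k) * ell k m * laguerre k m (ln x)))\<^sup>2
         * ln x ^ m / (fact m * x ^ 2))) \<longlonglongrightarrow> 0"
    unfolding set_integral_weighted_square
    using tendsto_divide_zero[OF laguerre_partial_sums_tendsto, of m "fact m"] by simp
qed (rule set_integrable_frac_laguerre frac_laguerre_coefficient)+

end
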